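(* Let $D$ be a $\ast$-IRKT. Then $D$ is an almost GCD domain if and only if for every $\ast$-super homog ideal $A$ of $D$ there is a positive integer $n$ such that $(A^n)^\ast$ is principal.
   Context: $\ast$ is a star operation on the integral domain $D$ of finite character. A $\ast$-ideal is a nonzero fractional ideal $I$ with $I^\ast=I$; of finite type if $I=J^\ast$ for some nonzero finitely generated $J$. A maximal $\ast$-ideal is an integral $\ast$-ideal maximal among proper integral $\ast$-ideals. $I$ is $\ast$-invertible if $(II^{-1})^\ast=D$. A $\ast$-super homog ideal is a proper integral $\ast$-ideal $I$ of finite type such that every $\ast$-ideal of finite type containing $I$ is $\ast$-invertible and $(A+B)^\ast\neq D$ for every pair $A,B$ of proper integral $\ast$-ideals of finite type containing $I$. $D$ is a $\ast$-IRKT if $D_P$ is a valuation domain for every maximal $\ast$-ideal $P$, $D=\bigcap_P D_P$ over the maximal $\ast$-ideals with the intersection locally finite, and no two distinct maximal $\ast$-ideals contain a common nonzero prime ideal. $D$ is an almost GCD (AGCD) domain if for every pair $a,b$ of nonzero elements there is $n\ge1$ such that $a^nD\cap b^nD$ is principal. *)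

theory Defs
  imports Main
begin

text \<open>Setting: the integral domain D is a subring of a field of type 'a which is
  its quotient field K. Fractional ideals are D-submodules of K.\<close>

definition subring :: "'a::field set \<Rightarrow> bool" where
  "subring D \<longleftrightarrow> 0 \<in> D \<and> 1 \<in> D \<and>
     (\<forall>x\<in>D. \<forall>y\<in>D. x + y \<in> D \<and> x * y \<in> D \<and> - x \<in> D)"

definition is_quotient_field_of :: "'a::field set \<Rightarrow> bool" where
  "is_quotient_field_of D \<longleftrightarrow> subring D \<and>
     (\<forall>z. \<exists>a\<in>D. \<exists>b\<in>D. b \<noteq> 0 \<and> z = a / b)"

definition dsubmodule :: "'a::field set \<Rightarrow> 'a set \<Rightarrow> bool" where
  "dsubmodule D I \<longleftrightarrow> 0 \<in> I \<and> (\<forall>x\<in>I. \<forall>y\<in>I. x + y \<in> I) \<and> (\<forall>d\<in>D. \<forall>x\<in>I. d * x \<in> I)"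

definition frac_ideal :: "'a::field set \<Rightarrow> 'a set \<Rightarrow> bool" where
  "frac_ideal D I \<longleftrightarrow> dsubmodule D I \<and> (\<exists>d\<in>D. d \<noteq> 0 \<and> (\<forall>x\<in>I. d * x \<in> D))"

definition nz_frac_ideal :: "'a::field set \<Rightarrow> 'a set \<Rightarrow> bool" where
  "nz_frac_ideal D I \<longleftrightarrow> frac_ideal D I \<and> I \<noteq> {0}"

definition smul :: "'a::field \<Rightarrow> 'a set \<Rightarrow> 'a set" where
  "smul x I = (\<lambda>y. x * y) ` I"

definition gen :: "'a::field set \<Rightarrow> 'a set \<Rightarrow> 'a set" where
  "gen D S = \<Inter> {M. dsubmodule D M \<and> S \<subseteq> M}"

definition nz_fg_ideal :: "'a::field set \<Rightarrow> 'a set \<Rightarrow> bool" where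
  "nz_fg_ideal D J \<longleftrightarrow> (\<exists>S. finite S \<and> J = gen D S) \<and> J \<noteq> {0}"

definition star_operation :: "'a::field set \<Rightarrow> ('a set \<Rightarrow> 'a set) \<Rightarrow> bool" where
  "star_operation D st \<longleftrightarrow>
     (\<forall>x. x \<noteq> 0 \<longrightarrow> st (smul x D) = smul x D) \<and>
     (\<forall>x I. x \<noteq> 0 \<and> nz_frac_ideal D I \<longrightarrow> st (smul x I) = smul x (st I)) \<and>
     (\<forall>I. nz_frac_ideal D I \<longrightarrow> nz_frac_ideal D (st I) \<and> I \<subseteq> st I) \<and>
     (\<forall>I J. nz_frac_ideal D I \<and> nz_frac_ideal D J \<and> I \<subseteq> J \<longrightarrow> st I \<subseteq> st J) \<and>
     (\<forall>I. nz_frac_ideal D I \<longrightarrow> st (st I) = st I)"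

definition finite_character :: "'a::field set \<Rightarrow> ('a set \<Rightarrow> 'a set) \<Rightarrow> bool" where
  "finite_character D st \<longleftrightarrow>
     (\<forall>I. nz_frac_ideal D I \<longrightarrow> st I = \<Union> {st J | J. nz_fg_ideal D J \<and> J \<subseteq> I})"

definition star_ideal :: "'a::field set \<Rightarrow> ('a set \<Rightarrow> 'a set) \<Rightarrow> 'a set \<Rightarrow> bool" where
  "star_ideal D st I \<longleftrightarrow> nz_frac_ideal D I \<and> st I = I"

definition finite_type :: "'a::field set \<Rightarrow> ('a set \<Rightarrow> 'a set) \<Rightarrow> 'a set \<Rightarrow> bool" where
  "finite_type D st I \<longleftrightarrow> star_ideal D st I \<and> (\<exists>J. nz_fg_ideal D J \<and> I = st J)"

definition max_star_ideal :: "'a::field set \<Rightarrow> ('a set \<Rightarrow> 'a set) \<Rightarrow> 'a set \<Rightarrow> bool" where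
  "max_star_ideal D st P \<longleftrightarrow> star_ideal D st P \<and> P \<subseteq> D \<and> P \<noteq> D \<and>
     (\<forall>Q. star_ideal D st Q \<and> Q \<subseteq> D \<and> Q \<noteq> D \<and> P \<subseteq> Q \<longrightarrow> Q = P)"

definition ideal_mult :: "'a::field set \<Rightarrow> 'a set \<Rightarrow> 'a set \<Rightarrow> 'a set" where
  "ideal_mult D I J = gen D {a * b | a b. a \<in> I \<and> b \<in> J}"

definition ideal_sum :: "'a::field set \<Rightarrow> 'a set \<Rightarrow> 'a set \<Rightarrow> 'a set" where
  "ideal_sum D I J = gen D (I \<union> J)"

definition finv :: "'a::field set \<Rightarrow> 'a set \<Rightarrow> 'a set" where
  "finv D I = {x. \<forall>y\<in>I. x * y \<in> D}"

primrec ipow :: "'a::field set \<Rightarrow> 'a set \<Rightarrow> nat \<Rightarrow> 'a set" where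
  "ipow D A 0 = D"
| "ipow D A (Suc n) = ideal_mult D A (ipow D A n)"

definition star_invertible :: "'a::field set \<Rightarrow> ('a set \<Rightarrow> 'a set) \<Rightarrow> 'a set \<Rightarrow> bool" where
  "star_invertible D st I \<longleftrightarrow> st (ideal_mult D I (finv D I)) = D"

definition super_homog :: "'a::field set \<Rightarrow> ('a set \<Rightarrow> 'a set) \<Rightarrow> 'a set \<Rightarrow> bool" where
  "super_homog D st I \<longleftrightarrow> I \<subseteq> D \<and> I \<noteq> D \<and> finite_type D st I \<and>
     (\<forall>J. finite_type D st J \<and> I \<subseteq> J \<longrightarrow> star_invertible D st J) \<and>
     (\<forall>A B. finite_type D st A \<and> A \<subseteq> D \<and> A \<noteq> D \<and> I \<subseteq> A \<and>
            finite_type D st B \<and> B \<subseteq> D \<and> B \<noteq> D \<and> I \<subseteq> B \<longrightarrow>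
            st (ideal_sum D A B) \<noteq> D)"

definition localization :: "'a::field set \<Rightarrow> 'a set \<Rightarrow> 'a set" where
  "localization D P = {x. \<exists>s\<in>D - P. s * x \<in> D}"

definition valuation_domain :: "'a::field set \<Rightarrow> bool" where
  "valuation_domain V \<longleftrightarrow> subring V \<and> (\<forall>x. x \<noteq> 0 \<longrightarrow> x \<in> V \<or> inverse x \<in> V)"

definition prime_ideal :: "'a::field set \<Rightarrow> 'a set \<Rightarrow> bool" where
  "prime_ideal D R \<longleftrightarrow> R \<subseteq> D \<and> dsubmodule D R \<and> R \<noteq> D \<and>
     (\<forall>a\<in>D. \<forall>b\<in>D. a * b \<in> R \<longrightarrow> a \<in> R \<or> b \<in> R)"

definition star_IRKT :: "'a::field set \<Rightarrow> ('a set \<Rightarrow> 'a set) \<Rightarrow> bool" where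
  "star_IRKT D st \<longleftrightarrow>
     (\<forall>P. max_star_ideal D st P \<longrightarrow> valuation_domain (localization D P)) \<and>
     D = \<Inter> {localization D P | P. max_star_ideal D st P} \<and>
     (\<forall>x\<in>D. x \<noteq> 0 \<longrightarrow> finite {P. max_star_ideal D st P \<and> x \<in> P}) \<and>
     (\<forall>P Q. max_star_ideal D st P \<and> max_star_ideal D st Q \<and> P \<noteq> Q \<longrightarrow>
        \<not> (\<exists>R. prime_ideal D R \<and> R \<noteq> {0} \<and> R \<subseteq> P \<and> R \<subseteq> Q))"

definition AGCD :: "'a::field set \<Rightarrow> bool" where
  "AGCD D \<longleftrightarrow> (\<forall>a\<in>D. \<forall>b\<in>D. a \<noteq> 0 \<and> b \<noteq> 0 \<longrightarrow>
     (\<exists>n\<ge>1. \<exists>c\<in>D. smul (a ^ n) D \<inter> smul (b ^ n) D = smul c D))"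

end

theory Submission
  imports Defs
begin

text \<open>In a \<open>\<star>\<close>-IRKT every super homogeneous ideal \<open>A\<close> lies in exactly one maximal
  \<open>\<star>\<close>-ideal \<open>P\<close>, and in the valuation ring \<open>D\<^sub>P\<close> it is generated by one of its elements \<open>g\<close>.
  By the local-global principle \<open>D = \<Inter> D\<^sub>Q\<close>, \<open>(A\<^sup>n)\<^sup>\<star> = xD\<close> holds exactly when \<open>x\<close> is
  associated to \<open>g\<^sup>n\<close> in \<open>D\<^sub>P\<close> and is a unit in every other \<open>D\<^sub>Q\<close>.
  If \<open>D\<close> is AGCD, such an \<open>x\<close> is obtained from \<open>g\<close> by repeatedly taking gcds of powers, which
  removes the finitely many maximal \<open>\<star>\<close>-ideals \<open>Q \<noteq> P\<close> containing \<open>g\<close> one at a time.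
  Conversely, given \<open>a, b\<close>, every maximal \<open>\<star>\<close>-ideal \<open>P\<close> containing both carries a super
  homogeneous ideal generated locally by whichever of \<open>a, b\<close> has the smaller value; this uses
  that no two maximal \<open>\<star>\<close>-ideals share a nonzero prime. Multiplying the principal generators of
  suitable powers gives \<open>X\<close> associated to \<open>min(a,b)\<^sup>N\<close> in every \<open>D\<^sub>Q\<close>, and then
  \<open>a\<^sup>N D \<inter> b\<^sup>N D = (a\<^sup>N b\<^sup>N / X) D\<close>.\<close>

lemma dsubmodule_zero: "dsubmodule D I \<Longrightarrow> 0 \<in> I"
  by (simp add: dsubmodule_def)

lemma dsubmodule_add: "dsubmodule D I \<Longrightarrow> x \<in> I \<Longrightarrow> y \<in> I \<Longrightarrow> x + y \<in> I"
  by (simp add: dsubmodule_def)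

lemma dsubmodule_mult: "dsubmodule D I \<Longrightarrow> d \<in> D \<Longrightarrow> x \<in> I \<Longrightarrow> d * x \<in> I"
  by (simp add: dsubmodule_def)

lemma dsubmodule_gen: "dsubmodule D (gen D S)"
  unfolding gen_def dsubmodule_def by auto

lemma gen_superset: "S \<subseteq> gen D S"
  unfolding gen_def by auto

lemma gen_least: "dsubmodule D M \<Longrightarrow> S \<subseteq> M \<Longrightarrow> gen D S \<subseteq> M"
  unfolding gen_def by auto

lemma gen_mono: "S \<subseteq> T \<Longrightarrow> gen D S \<subseteq> gen D T"
  by (meson gen_superset gen_least dsubmodule_gen order_trans)

lemma gen_zeros: "\<forall>s\<in>S. s = 0 \<Longrightarrow> gen D S = {0}"
proof -
  assume "\<forall>s\<in>S. s = 0"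
  then have "gen D S \<subseteq> {0}" by (intro gen_least) (auto simp: dsubmodule_def)
  then show ?thesis using dsubmodule_gen dsubmodule_zero by blast
qed

lemma mem_ideal_mult: "a \<in> I \<Longrightarrow> b \<in> J \<Longrightarrow> a * b \<in> ideal_mult D I J"
  unfolding ideal_mult_def by (rule subsetD[OF gen_superset]) blast

lemma mem_ipow_Suc: "a \<in> A \<Longrightarrow> b \<in> ipow D A n \<Longrightarrow> a * b \<in> ipow D A (Suc n)"
  by (simp add: mem_ideal_mult)

lemma mem_smul: "y \<in> smul x I \<longleftrightarrow> (\<exists>d\<in>I. y = x * d)"
  by (auto simp: smul_def)

lemma dsubmodule_smul:
  fixes x :: "'a::field"
  assumes I: "dsubmodule D I"
  shows "dsubmodule D (smul x I)"
  unfolding dsubmodule_def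
proof (intro conjI ballI)
  show "0 \<in> smul x I" using dsubmodule_zero[OF I] mem_smul by fastforce
next
  fix u v assume "u \<in> smul x I" "v \<in> smul x I"
  then obtain d e where "d \<in> I" "e \<in> I" "u = x * d" "v = x * e" by (auto simp: mem_smul)
  then show "u + v \<in> smul x I"
    unfolding mem_smul using dsubmodule_add[OF I] by (intro bexI[of _ "d + e"]) (auto simp: distrib_left)
next
  fix c u assume "c \<in> D" "u \<in> smul x I"
  then obtain d where "d \<in> I" "u = x * d" by (auto simp: mem_smul)
  then show "c * u \<in> smul x I"
    unfolding mem_smul using \<open>c \<in> D\<close> dsubmodule_mult[OF I] by (intro bexI[of _ "c * d"]) (auto simp: algebra_simps)
qed

lemma dsubmodule_Union_chain:
  assumes "Cs \<noteq> {}" and chain: "\<forall>X\<in>Cs. \<forall>Y\<in>Cs. X \<subseteq> Y \<or> Y \<subseteq> X" and sub: "\<forall>X\<in>Cs. dsubmodule D X"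
  shows "dsubmodule D (\<Union>Cs)"
  unfolding dsubmodule_def
proof (intro conjI ballI)
  show "0 \<in> \<Union>Cs" using assms(1) sub dsubmodule_zero by blast
next
  fix x y assume "x \<in> \<Union>Cs" "y \<in> \<Union>Cs"
  then obtain X Y where XY: "X \<in> Cs" "Y \<in> Cs" "x \<in> X" "y \<in> Y" by blast
  then have "x + y \<in> X \<or> x + y \<in> Y" using chain sub dsubmodule_add by (metis subsetD)
  then show "x + y \<in> \<Union>Cs" using XY by blast
next
  fix d x assume "d \<in> D" "x \<in> \<Union>Cs"
  then show "d * x \<in> \<Union>Cs" using sub dsubmodule_mult by blast
qed

lemma dsubmodule_one_eq: "dsubmodule D I \<Longrightarrow> I \<subseteq> D \<Longrightarrow> 1 \<in> I \<Longrightarrow> I = D"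
  using dsubmodule_mult[of D I _ 1] by force


locale quotient_domain =
  fixes D :: "'a::field set"
  assumes quotient_field: "is_quotient_field_of D"
begin

lemma subring_D: "subring D"
  using quotient_field by (simp add: is_quotient_field_of_def)

lemma zero_in_D: "0 \<in> D" and one_in_D: "1 \<in> D"
  using subring_D by (auto simp: subring_def)

lemma add_in_D: "x \<in> D \<Longrightarrow> y \<in> D \<Longrightarrow> x + y \<in> D"
  and mult_in_D: "x \<in> D \<Longrightarrow> y \<in> D \<Longrightarrow> x * y \<in> D"
  using subring_D by (auto simp: subring_def)

lemma power_in_D: "x \<in> D \<Longrightarrow> x ^ n \<in> D"
  by (induct n) (auto simp: one_in_D mult_in_D)

lemma ex_fraction: "\<exists>a\<in>D. \<exists>b\<in>D. b \<noteq> 0 \<and> z = a / b"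
  using quotient_field by (simp add: is_quotient_field_of_def)

lemma dsubmodule_D: "dsubmodule D D"
  by (simp add: dsubmodule_def zero_in_D add_in_D mult_in_D)

lemma mem_smul_self: "x \<in> smul x D"
  using one_in_D mem_smul by fastforce

lemma finite_common_denominator:
  assumes "finite S" shows "\<exists>d\<in>D. d \<noteq> 0 \<and> (\<forall>s\<in>S. d * s \<in> D)"
  using assms
proof (induct S)
  case empty then show ?case using one_in_D by (intro bexI[of _ 1]) auto
next
  case (insert x S)
  then obtain d where d: "d \<in> D" "d \<noteq> 0" "\<forall>s\<in>S. d * s \<in> D" by auto
  obtain a b where ab: "a \<in> D" "b \<in> D" "b \<noteq> 0" "x = a / b" using ex_fraction by blast
  have "b * d * x = d * a" using ab by (simp add: field_simps)
  moreover have "\<forall>s\<in>S. b * d * s \<in> D" using d ab by (metis mult_in_D mult.assoc)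
  ultimately show ?case using d ab mult_in_D by (metis insert_iff mult_eq_0_iff)
qed

lemma dsubmodule_scaled: "dsubmodule D {y. c * y \<in> D}"
  unfolding dsubmodule_def by (auto simp: zero_in_D add_in_D mult_in_D distrib_left)
    (metis mult_in_D mult.left_commute)

lemma frac_ideal_gen: assumes "finite S" shows "frac_ideal D (gen D S)"
proof -
  obtain d where d: "d \<in> D" "d \<noteq> 0" "\<forall>s\<in>S. d * s \<in> D"
    using finite_common_denominator[OF assms] by blast
  have "gen D S \<subseteq> {y. d * y \<in> D}" using d by (intro gen_least dsubmodule_scaled) auto
  then show ?thesis using d dsubmodule_gen by (auto simp: frac_ideal_def)
qed

lemma nz_frac_ideal_gen: "finite S \<Longrightarrow> gen D S \<noteq> {0} \<Longrightarrow> nz_frac_ideal D (gen D S)"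
  by (simp add: nz_frac_ideal_def frac_ideal_gen)

lemma nz_fg_imp_nz_frac: "nz_fg_ideal D J \<Longrightarrow> nz_frac_ideal D J"
  unfolding nz_fg_ideal_def using nz_frac_ideal_gen by auto

lemma nz_frac_ideal_integral:
  "dsubmodule D I \<Longrightarrow> I \<subseteq> D \<Longrightarrow> x \<in> I \<Longrightarrow> x \<noteq> 0 \<Longrightarrow> nz_frac_ideal D I"
  unfolding nz_frac_ideal_def frac_ideal_def using one_in_D by (auto intro!: bexI[of _ 1])

lemma nz_frac_ideal_D: "nz_frac_ideal D D"
  using nz_frac_ideal_integral[OF dsubmodule_D order_refl one_in_D] by simp

lemma nz_frac_ideal_smul:
  assumes x: "x \<noteq> 0" and I: "nz_frac_ideal D I" shows "nz_frac_ideal D (smul x I)"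
proof -
  have ds: "dsubmodule D I" and nz: "I \<noteq> {0}"
    and "\<exists>d\<in>D. d \<noteq> 0 \<and> (\<forall>y\<in>I. d * y \<in> D)"
    using I by (auto simp: nz_frac_ideal_def frac_ideal_def)
  then obtain d where d: "d \<in> D" "d \<noteq> 0" "\<forall>y\<in>I. d * y \<in> D" by blast
  obtain a b where ab: "a \<in> D" "b \<in> D" "b \<noteq> 0" "x = a / b" using ex_fraction by blast
  have "(b * d) * (x * i) \<in> D" if "i \<in> I" for i
  proof -
    have "(b * d) * (x * i) = a * (d * i)" using ab by simp
    moreover have "a * (d * i) \<in> D" using d that ab mult_in_D by blast
    ultimately show ?thesis by metis
  qed
  then have "\<forall>y\<in>smul x I. (b * d) * y \<in> D" by (auto simp: mem_smul)
  moreover have "b * d \<in> D" "b * d \<noteq> 0" using ab d mult_in_D by auto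
  moreover obtain i where "i \<in> I" "i \<noteq> 0" using nz dsubmodule_zero[OF ds] by blast
  then have "x * i \<in> smul x I" "x * i \<noteq> 0" using x mem_smul by auto
  ultimately show ?thesis
    using dsubmodule_smul[OF ds] unfolding nz_frac_ideal_def frac_ideal_def by blast
qed

lemma ideal_mult_finv_subset_D: "ideal_mult D I (finv D I) \<subseteq> D"
  unfolding ideal_mult_def finv_def
  by (intro gen_least[OF dsubmodule_D]) (auto simp: mult.commute)

lemma dsubmodule_ipow: "dsubmodule D (ipow D A n)"
  by (cases n) (auto simp: dsubmodule_D ideal_mult_def dsubmodule_gen)

lemma ipow_subset_D: "A \<subseteq> D \<Longrightarrow> ipow D A n \<subseteq> D"
proof (induct n)
  case 0 then show ?case by simp
next
  case (Suc n)
  show ?case unfolding ipow.simps ideal_mult_def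
    using Suc mult_in_D by (intro gen_least[OF dsubmodule_D]) blast
qed

lemma power_in_ipow: "a \<in> A \<Longrightarrow> a ^ n \<in> ipow D A n"
  by (induct n) (simp_all add: one_in_D mem_ipow_Suc del: ipow.simps(2))

lemma nz_frac_ideal_ipow: "A \<subseteq> D \<Longrightarrow> a \<in> A \<Longrightarrow> a \<noteq> 0 \<Longrightarrow> nz_frac_ideal D (ipow D A n)"
  using nz_frac_ideal_integral[OF dsubmodule_ipow ipow_subset_D power_in_ipow] by simp

end


locale star_domain = quotient_domain +
  fixes st :: "'a::field set \<Rightarrow> 'a set"
  assumes star_op: "star_operation D st"
    and fin_char: "finite_character D st"
begin

lemma star_principal: "x \<noteq> 0 \<Longrightarrow> st (smul x D) = smul x D"
  and star_smul: "x \<noteq> 0 \<Longrightarrow> nz_frac_ideal D I \<Longrightarrow> st (smul x I) = smul x (st I)"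
  and star_nz: "nz_frac_ideal D I \<Longrightarrow> nz_frac_ideal D (st I)"
  and star_extensive: "nz_frac_ideal D I \<Longrightarrow> I \<subseteq> st I"
  and star_mono: "nz_frac_ideal D I \<Longrightarrow> nz_frac_ideal D J \<Longrightarrow> I \<subseteq> J \<Longrightarrow> st I \<subseteq> st J"
  and star_idem: "nz_frac_ideal D I \<Longrightarrow> st (st I) = st I"
  using star_op by (simp_all add: star_operation_def)

lemma star_D: "st D = D"
  using star_principal[of 1] by (simp add: smul_def)

lemma star_dsubmodule: "nz_frac_ideal D I \<Longrightarrow> dsubmodule D (st I)"
  using star_nz by (simp add: nz_frac_ideal_def frac_ideal_def)

lemma star_subset_D: "nz_frac_ideal D I \<Longrightarrow> I \<subseteq> D \<Longrightarrow> st I \<subseteq> D"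
  using star_mono[OF _ nz_frac_ideal_D] star_D by auto

lemma star_subset_star_ideal: "star_ideal D st Q \<Longrightarrow> nz_frac_ideal D I \<Longrightarrow> I \<subseteq> Q \<Longrightarrow> st I \<subseteq> Q"
  unfolding star_ideal_def using star_mono by metis

lemma gen_subset_star_gen: "finite T \<Longrightarrow> gen D T \<noteq> {0} \<Longrightarrow> T \<subseteq> st (gen D T)"
  using gen_superset[of T D] star_extensive[OF nz_frac_ideal_gen] by (rule subset_trans)

lemma star_gen_mono:
  assumes "finite T" "S \<subseteq> T" "gen D S \<noteq> {0}" shows "st (gen D S) \<subseteq> st (gen D T)"
proof -
  have sub: "gen D S \<subseteq> gen D T" using assms(2) by (rule gen_mono)
  have "gen D T \<noteq> {0}" using sub assms(3) dsubmodule_gen dsubmodule_zero by blast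
  moreover have "finite S" using assms(1,2) by (rule rev_finite_subset)
  ultimately show ?thesis
    using star_mono[OF nz_frac_ideal_gen nz_frac_ideal_gen sub] assms(1,3) by simp
qed

lemma finite_type_star_gen:
  assumes "finite T" "gen D T \<noteq> {0}" shows "finite_type D st (st (gen D T))"
proof -
  have nz: "nz_frac_ideal D (gen D T)" using nz_frac_ideal_gen[OF assms] .
  have "star_ideal D st (st (gen D T))" using star_nz[OF nz] star_idem[OF nz] by (simp add: star_ideal_def)
  moreover have "nz_fg_ideal D (gen D T)" using assms by (auto simp: nz_fg_ideal_def)
  ultimately show ?thesis unfolding finite_type_def by blast
qed

lemma finite_typeE:
  assumes "finite_type D st A"
  obtains S where "finite S" "gen D S \<noteq> {0}" "A = st (gen D S)"
  using assms unfolding finite_type_def nz_fg_ideal_def by blast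

abbreviation max_star :: "'a set \<Rightarrow> bool" where
  "max_star P \<equiv> max_star_ideal D st P"

lemma max_star_subset_D: "max_star P \<Longrightarrow> P \<subseteq> D"
  and max_star_ne_D: "max_star P \<Longrightarrow> P \<noteq> D"
  and max_star_star_ideal: "max_star P \<Longrightarrow> star_ideal D st P"
  by (auto simp: max_star_ideal_def)

lemma max_star_nz: "max_star P \<Longrightarrow> nz_frac_ideal D P"
  using max_star_star_ideal by (simp add: star_ideal_def)

lemma max_star_dsubmodule: "max_star P \<Longrightarrow> dsubmodule D P"
  using max_star_nz by (simp add: nz_frac_ideal_def frac_ideal_def)

lemma max_star_zero: "max_star P \<Longrightarrow> 0 \<in> P"
  using max_star_dsubmodule dsubmodule_zero by blast

lemma max_star_one: "max_star P \<Longrightarrow> 1 \<notin> P"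
  by (metis dsubmodule_one_eq max_star_dsubmodule max_star_subset_D max_star_ne_D)

lemma subset_max_star_proper: "max_star P \<Longrightarrow> X \<subseteq> P \<Longrightarrow> X \<subseteq> D \<and> X \<noteq> D"
  using max_star_subset_D max_star_ne_D by blast

lemma max_star_maximal: "max_star P \<Longrightarrow> max_star Q \<Longrightarrow> P \<subseteq> Q \<Longrightarrow> Q = P"
  unfolding max_star_ideal_def by blast

lemma Union_chain_proper_star_ideal:
  assumes ne: "Cs \<noteq> {}" and ch: "subset.chain {Q. star_ideal D st Q \<and> Q \<subseteq> D \<and> Q \<noteq> D} Cs"
  shows "star_ideal D st (\<Union>Cs) \<and> \<Union>Cs \<subseteq> D \<and> \<Union>Cs \<noteq> D"
proof -
  have mem: "star_ideal D st Q" "Q \<subseteq> D" "Q \<noteq> D" if "Q \<in> Cs" for Q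
    using ch that by (auto simp: subset_chain_def)
  have ds: "\<forall>Q\<in>Cs. dsubmodule D Q"
    using mem(1) by (simp add: star_ideal_def nz_frac_ideal_def frac_ideal_def)
  have dsU: "dsubmodule D (\<Union>Cs)"
    using dsubmodule_Union_chain[OF ne _ ds] ch by (auto simp: subset_chain_def)
  have UD: "\<Union>Cs \<subseteq> D" using mem by blast
  have not1: "1 \<notin> \<Union>Cs"
  proof
    assume "1 \<in> \<Union>Cs"
    then obtain Q where "Q \<in> Cs" "1 \<in> Q" by blast
    then show False using mem ds dsubmodule_one_eq by metis
  qed
  obtain Q0 where Q0: "Q0 \<in> Cs" using ne by blast
  then have "Q0 \<noteq> {0}" "0 \<in> Q0"
    using mem(1) ds dsubmodule_zero by (auto simp: star_ideal_def nz_frac_ideal_def)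
  then obtain x where "x \<in> Q0" "x \<noteq> 0" by blast
  then have nzU: "nz_frac_ideal D (\<Union>Cs)"
    using nz_frac_ideal_integral[OF dsU UD, of x] Q0 by blast
  have "st (\<Union>Cs) \<subseteq> \<Union>Cs"
  proof
    fix x assume "x \<in> st (\<Union>Cs)"
    then obtain J where J: "nz_fg_ideal D J" "J \<subseteq> \<Union>Cs" "x \<in> st J"
      using fin_char nzU unfolding finite_character_def by blast
    obtain S where S: "finite S" "J = gen D S" using J unfolding nz_fg_ideal_def by blast
    then obtain Q where Q: "Q \<in> Cs" "S \<subseteq> Q"
      using finite_subset_Union_chain[OF S(1) _ ne ch] J gen_superset by blast
    then have "st J \<subseteq> Q"
      using star_subset_star_ideal[OF mem(1) nz_fg_imp_nz_frac[OF J(1)]] S ds gen_least by blast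
    then show "x \<in> \<Union>Cs" using J Q by blast
  qed
  then show ?thesis
    using star_extensive[OF nzU] nzU UD not1 one_in_D by (auto simp: star_ideal_def)
qed

lemma max_star_ideal_above:
  assumes C: "nz_frac_ideal D C" "C \<subseteq> D" "st C \<noteq> D"
  obtains P where "max_star P" "st C \<subseteq> P"
proof -
  define \<A> where "\<A> = {Q. star_ideal D st Q \<and> Q \<subseteq> D \<and> Q \<noteq> D \<and> st C \<subseteq> Q}"
  have "st C \<in> \<A>"
    using C star_nz star_idem star_subset_D by (simp add: \<A>_def star_ideal_def)
  moreover have "\<Union>Cs \<in> \<A>" if ne: "Cs \<noteq> {}" and ch: "subset.chain \<A> Cs" for Cs
  proof -
    have "subset.chain {Q. star_ideal D st Q \<and> Q \<subseteq> D \<and> Q \<noteq> D} Cs"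
      using ch by (auto simp: subset_chain_def \<A>_def)
    moreover obtain Q where "Q \<in> Cs" using ne by blast
    then have "st C \<subseteq> \<Union>Cs" using ch by (auto simp: subset_chain_def \<A>_def)
    ultimately show ?thesis using Union_chain_proper_star_ideal[OF ne] by (simp add: \<A>_def)
  qed
  ultimately obtain M where M: "M \<in> \<A>" "\<forall>X\<in>\<A>. M \<subseteq> X \<longrightarrow> X = M"
    using subset_Zorn_nonempty[of \<A>] by blast
  then have "max_star M" unfolding max_star_ideal_def \<A>_def by blast
  then show ?thesis using M that \<A>_def by blast
qed

lemma star_eq_D_if_not_in_max:
  assumes "nz_frac_ideal D C" "C \<subseteq> D" "\<And>P. max_star P \<Longrightarrow> \<not> C \<subseteq> P"
  shows "st C = D"
proof (rule ccontr)
  assume "st C \<noteq> D"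
  then obtain P where "max_star P" "st C \<subseteq> P" using max_star_ideal_above assms(1,2) by blast
  then show False using assms(3) star_extensive[OF assms(1)] by blast
qed

lemma max_star_above_sum:
  assumes "X \<subseteq> D" "Y \<subseteq> D" "x \<in> X" "x \<noteq> 0" "st (ideal_sum D X Y) \<noteq> D"
  obtains R where "max_star R" "X \<subseteq> R" "Y \<subseteq> R"
proof -
  have sumD: "ideal_sum D X Y \<subseteq> D"
    unfolding ideal_sum_def using assms(1,2) by (intro gen_least[OF dsubmodule_D]) blast
  have XY: "X \<union> Y \<subseteq> ideal_sum D X Y" unfolding ideal_sum_def by (rule gen_superset)
  then have nz: "nz_frac_ideal D (ideal_sum D X Y)"
    using nz_frac_ideal_integral[OF _ sumD] dsubmodule_gen assms(3,4) unfolding ideal_sum_def by blast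
  obtain R where "max_star R" "st (ideal_sum D X Y) \<subseteq> R"
    using max_star_ideal_above[OF nz sumD assms(5)] by blast
  then show ?thesis using that XY star_extensive[OF nz] by blast
qed

lemma nz_frac_ideal_conductor:
  assumes I: "nz_frac_ideal D I" shows "nz_frac_ideal D {d \<in> D. d * z \<in> I}"
proof -
  have ds: "dsubmodule D I" and nz: "I \<noteq> {0}" and "\<exists>d\<in>D. d \<noteq> 0 \<and> (\<forall>y\<in>I. d * y \<in> D)"
    using I by (auto simp: nz_frac_ideal_def frac_ideal_def)
  then obtain e where e: "e \<in> D" "e \<noteq> 0" "\<forall>y\<in>I. e * y \<in> D" by blast
  have dsC: "dsubmodule D {d \<in> D. d * z \<in> I}" unfolding dsubmodule_def
  proof (intro conjI ballI)
    show "0 \<in> {d \<in> D. d * z \<in> I}" using zero_in_D dsubmodule_zero[OF ds] by simp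
  next
    fix x y assume "x \<in> {d \<in> D. d * z \<in> I}" "y \<in> {d \<in> D. d * z \<in> I}"
    then show "x + y \<in> {d \<in> D. d * z \<in> I}"
      using add_in_D dsubmodule_add[OF ds] by (simp add: distrib_right)
  next
    fix c x assume "c \<in> D" "x \<in> {d \<in> D. d * z \<in> I}"
    then show "c * x \<in> {d \<in> D. d * z \<in> I}"
      using mult_in_D dsubmodule_mult[OF ds] by (simp add: mult.assoc)
  qed
  obtain i where i: "i \<in> I" "i \<noteq> 0" using nz dsubmodule_zero[OF ds] by blast
  obtain p q where pq: "p \<in> D" "q \<in> D" "q \<noteq> 0" "z = p / q" using ex_fraction by blast
  have "q * (e * i) * z = p * (e * i)" using pq by simp
  moreover have "p * (e * i) \<in> I" using dsubmodule_mult[OF ds] pq e i by blast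
  moreover have "q * (e * i) \<in> D" using pq e i mult_in_D by blast
  ultimately have "q * (e * i) \<in> {d \<in> D. d * z \<in> I}" by (metis (mono_tags, lifting) mem_Collect_eq)
  moreover have "q * (e * i) \<noteq> 0" using pq e i by simp
  ultimately show ?thesis using nz_frac_ideal_integral[OF dsC] by blast
qed

lemma mem_star_if_locally:
  assumes I: "nz_frac_ideal D I" and loc: "\<And>P. max_star P \<Longrightarrow> \<exists>s\<in>D - P. s * z \<in> I"
  shows "z \<in> st I"
proof (cases "z = 0")
  case True then show ?thesis using star_dsubmodule[OF I] dsubmodule_zero by simp
next
  case False
  define C where "C = {d \<in> D. d * z \<in> I}"
  have nzC: "nz_frac_ideal D C" unfolding C_def using nz_frac_ideal_conductor[OF I] .
  have "\<not> C \<subseteq> P" if "max_star P" for P using loc[OF that] unfolding C_def by blast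
  then have "st C = D" using star_eq_D_if_not_in_max[OF nzC] C_def by blast
  then have "z \<in> smul z (st C)" using mem_smul_self by simp
  also have "\<dots> = st (smul z C)" using star_smul[OF False nzC] by simp
  also have "\<dots> \<subseteq> st I"
  proof (rule star_mono[OF nz_frac_ideal_smul[OF False nzC] I])
    show "smul z C \<subseteq> I" by (auto simp: C_def mem_smul mult.commute)
  qed
  finally show ?thesis .
qed

end


locale star_irkt = star_domain +
  assumes irkt: "star_IRKT D st"
begin

abbreviation V :: "'a set \<Rightarrow> 'a set" where
  "V P \<equiv> localization D P"

lemma valuation_V: "max_star P \<Longrightarrow> valuation_domain (V P)"
  using irkt by (simp add: star_IRKT_def)

lemma mult_in_V: "max_star P \<Longrightarrow> x \<in> V P \<Longrightarrow> y \<in> V P \<Longrightarrow> x * y \<in> V P"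
  and add_in_V: "max_star P \<Longrightarrow> x \<in> V P \<Longrightarrow> y \<in> V P \<Longrightarrow> x + y \<in> V P"
  using valuation_V by (simp_all add: valuation_domain_def subring_def)

lemma power_in_V: "max_star P \<Longrightarrow> x \<in> V P \<Longrightarrow> x ^ n \<in> V P"
  using valuation_V by (induct n) (auto simp: mult_in_V valuation_domain_def subring_def)

lemma mem_V: "y \<in> V P \<longleftrightarrow> (\<exists>s\<in>D - P. s * y \<in> D)"
  by (simp add: localization_def)

lemma D_subset_V: "max_star P \<Longrightarrow> y \<in> D \<Longrightarrow> y \<in> V P"
  unfolding mem_V using max_star_one one_in_D by (intro bexI[of _ 1]) auto

lemma inverse_in_V: "max_star P \<Longrightarrow> s \<in> D \<Longrightarrow> s \<notin> P \<Longrightarrow> 1 / s \<in> V P"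
  unfolding mem_V using max_star_zero one_in_D by (intro bexI[of _ s]) auto

lemma V_dichotomy:
  assumes P: "max_star P" shows "x / y \<in> V P \<or> y / x \<in> V P"
proof (cases "x = 0 \<or> y = 0")
  case True then show ?thesis using D_subset_V[OF P zero_in_D] by auto
next
  case False
  then have "x / y \<noteq> 0" by simp
  then have "x / y \<in> V P \<or> inverse (x / y) \<in> V P"
    using valuation_V[OF P] unfolding valuation_domain_def by blast
  then show ?thesis by (metis inverse_divide)
qed

lemma V_div_trans:
  assumes "max_star P" "x / y \<in> V P" "y / z \<in> V P" "y \<noteq> 0" shows "x / z \<in> V P"
proof -
  have "x / z = (x / y) * (y / z)" using assms(4) by simp
  then show ?thesis using mult_in_V[OF assms(1-3)] by (simp only:)
qed

lemma max_star_prime: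
  assumes P: "max_star P" and ab: "a \<in> D" "b \<in> D" "a * b \<in> P" shows "a \<in> P \<or> b \<in> P"
proof (rule ccontr)
  assume "\<not> (a \<in> P \<or> b \<in> P)"
  then have n: "a \<notin> P" "b \<notin> P" "a \<noteq> 0" "b \<noteq> 0" using max_star_zero[OF P] by auto
  have "1 / a * (1 / b) \<in> V P" using inverse_in_V[OF P] ab n mult_in_V[OF P] by blast
  then obtain u where u: "u \<in> D" "u \<notin> P" "u * (1 / a * (1 / b)) \<in> D" unfolding mem_V by blast
  have "u = (u * (1 / a * (1 / b))) * (a * b)" using n by simp
  also have "\<dots> \<in> P" using u ab dsubmodule_mult[OF max_star_dsubmodule[OF P]] by blast
  finally show False using u by simp
qed

lemma power_notin_max_star: "max_star P \<Longrightarrow> u \<in> D \<Longrightarrow> u \<notin> P \<Longrightarrow> u ^ n \<notin> P"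
proof (induct n)
  case 0 then show ?case using max_star_one by simp
next
  case (Suc n) then show ?case using max_star_prime power_in_D by (metis power_Suc)
qed

lemma mem_max_star_if_div:
  assumes P: "max_star P" and x: "x \<in> D" "x / y \<in> V P" and y: "y \<in> P" "y \<noteq> 0"
  shows "x \<in> P"
proof -
  obtain s where s: "s \<in> D" "s \<notin> P" "s * (x / y) \<in> D" using x unfolding mem_V by blast
  have "s * x = (s * (x / y)) * y" using y by simp
  also have "\<dots> \<in> P" using s y dsubmodule_mult[OF max_star_dsubmodule[OF P]] by blast
  finally show "x \<in> P" using max_star_prime[OF P s(1) x(1)] s by blast
qed

lemma mem_D_iff_local: "y \<in> D \<longleftrightarrow> (\<forall>P. max_star P \<longrightarrow> y \<in> V P)"
proof -
  have "D = \<Inter> {V P | P. max_star P}" using irkt by (simp add: star_IRKT_def)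
  then show ?thesis by blast
qed

lemma finite_max_star_containing: "x \<in> D \<Longrightarrow> x \<noteq> 0 \<Longrightarrow> finite {P. max_star P \<and> x \<in> P}"
  using irkt by (simp add: star_IRKT_def)

lemma no_common_prime:
  "max_star P \<Longrightarrow> max_star Q \<Longrightarrow> P \<noteq> Q \<Longrightarrow> prime_ideal D R \<Longrightarrow> R \<noteq> {0} \<Longrightarrow>
    R \<subseteq> P \<Longrightarrow> R \<subseteq> Q \<Longrightarrow> False"
  using irkt unfolding star_IRKT_def by blast

lemma dsubmodule_local_multiples:
  assumes P: "max_star P" shows "dsubmodule D {y. y / c \<in> V P}"
  unfolding dsubmodule_def
proof (intro conjI ballI)
  show "0 \<in> {y. y / c \<in> V P}" using D_subset_V[OF P zero_in_D] by simp
next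
  fix x y assume "x \<in> {y. y / c \<in> V P}" "y \<in> {y. y / c \<in> V P}"
  then have "x / c + y / c \<in> V P" using add_in_V[OF P] by simp
  then show "x + y \<in> {y. y / c \<in> V P}" by (simp add: add_divide_distrib)
next
  fix d x assume "d \<in> D" "x \<in> {y. y / c \<in> V P}"
  then have "d * (x / c) \<in> V P" using mult_in_V[OF P D_subset_V[OF P]] by blast
  then show "d * x \<in> {y. y / c \<in> V P}" by simp
qed


lemma exists_local_min:
  assumes P: "max_star P" and "finite S" "\<exists>s\<in>S. s \<noteq> 0"
  shows "\<exists>g\<in>S. g \<noteq> 0 \<and> (\<forall>s\<in>S. s / g \<in> V P)"
  using assms(2,3)
proof (induct S)
  case empty then show ?case by simp
next
  case (insert x S)
  have one: "x / x \<in> V P" using D_subset_V[OF P one_in_D] D_subset_V[OF P zero_in_D] by (cases "x = 0") simp_all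
  show ?case
  proof (cases "\<exists>s\<in>S. s \<noteq> 0")
    case True
    then obtain g where g: "g \<in> S" "g \<noteq> 0" "\<forall>s\<in>S. s / g \<in> V P" using insert by blast
    show ?thesis
    proof (cases "x / g \<in> V P")
      case True then show ?thesis using g by auto
    next
      case False
      then have gx: "g / x \<in> V P" and x0: "x \<noteq> 0"
        using V_dichotomy[OF P] D_subset_V[OF P zero_in_D] by auto
      have "s / x \<in> V P" if "s \<in> S" for s using V_div_trans[OF P _ gx g(2)] g(3) that by blast
      then show ?thesis using x0 one by blast
    qed
  next
    case False
    then have x0: "x \<noteq> 0" using insert by auto
    have "\<forall>s\<in>S. s / x \<in> V P" using False D_subset_V[OF P zero_in_D] by auto
    then show ?thesis using x0 one by blast
  qed
qed

lemma local_common_denominator: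
  assumes P: "max_star P" and "finite S" "\<forall>s\<in>S. s / g \<in> V P"
  shows "\<exists>u\<in>D - P. \<forall>s\<in>S. u * (s / g) \<in> D"
  using assms(2,3)
proof (induct S)
  case empty then show ?case using one_in_D max_star_one[OF P] by blast
next
  case (insert x S)
  then obtain u where u: "u \<in> D - P" "\<forall>s\<in>S. u * (s / g) \<in> D" by auto
  obtain t where t: "t \<in> D" "t \<notin> P" "t * (x / g) \<in> D" using insert.prems unfolding mem_V by blast
  have "u * t \<in> D - P" using u t mult_in_D max_star_prime[OF P] by blast
  moreover have "(u * t) * (x / g) \<in> D" using u t mult_in_D by (metis Diff_iff mult.assoc)
  moreover have "(u * t) * (s / g) \<in> D" if "s \<in> S" for s
    using u t mult_in_D that by (metis mult.commute mult.left_commute)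
  ultimately show ?case by blast
qed

text \<open>Clearing denominators at \<open>P\<close> gives \<open>u \<cdot> S \<subseteq> gD\<close> with \<open>u \<notin> P\<close>; since \<open>\<star>\<close> commutes
  with multiplication by \<open>u\<close> and fixes \<open>gD\<close>, the same bound holds for \<open>(SD)\<^sup>\<star>\<close>.\<close>

lemma star_gen_local_bound:
  assumes P: "max_star P" and S: "finite S" "gen D S \<noteq> {0}" and g: "g \<noteq> 0"
    and Sg: "\<forall>s\<in>S. s / g \<in> V P"
  shows "\<exists>u\<in>D - P. \<forall>y\<in>st (gen D S). u * y / g \<in> D"
proof -
  obtain u where u: "u \<in> D - P" "\<forall>s\<in>S. u * (s / g) \<in> D"
    using local_common_denominator[OF P S(1) Sg] by blast
  have u0: "u \<noteq> 0" using u max_star_zero[OF P] by auto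
  have nzS: "nz_frac_ideal D (gen D S)" using nz_frac_ideal_gen[OF S] .
  have "gen D S \<subseteq> {y. (u / g) * y \<in> D}" using u by (intro gen_least dsubmodule_scaled) auto
  then have "smul u (gen D S) \<subseteq> smul g D"
    using g by (force simp: mem_smul intro!: bexI[of _ "u / g * _"])
  then have "st (smul u (gen D S)) \<subseteq> st (smul g D)"
    using star_mono[OF nz_frac_ideal_smul[OF u0 nzS] nz_frac_ideal_smul[OF g nz_frac_ideal_D]] by blast
  then have "smul u (st (gen D S)) \<subseteq> smul g D"
    using star_smul[OF u0 nzS] star_principal[OF g] by simp
  then have "u * y / g \<in> D" if "y \<in> st (gen D S)" for y
    using that g by (force simp: mem_smul)
  then show ?thesis using u by blast
qed

lemma star_local_bound:
  assumes P: "max_star P" and I: "nz_frac_ideal D I" and g: "g \<noteq> 0"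
    and Ig: "\<forall>y\<in>I. y / g \<in> V P"
  shows "\<forall>y\<in>st I. y / g \<in> V P"
proof
  fix x assume "x \<in> st I"
  then obtain J where J: "nz_fg_ideal D J" "J \<subseteq> I" "x \<in> st J"
    using fin_char I unfolding finite_character_def by blast
  obtain S where S: "finite S" "J = gen D S" "J \<noteq> {0}" using J unfolding nz_fg_ideal_def by blast
  have "\<forall>s\<in>S. s / g \<in> V P" using S J Ig gen_superset by blast
  then obtain u where u: "u \<in> D - P" "\<forall>y\<in>st (gen D S). u * y / g \<in> D"
    using star_gen_local_bound[OF P S(1) _ g] S by auto
  have "u * (x / g) \<in> D" using u J S by (metis times_divide_eq_right)
  then show "x / g \<in> V P" using u unfolding mem_V by blast
qed

lemma star_invertible_finite_type:
  assumes J: "nz_fg_ideal D J" shows "star_invertible D st (st J)"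
proof -
  obtain S where S: "finite S" "J = gen D S" "J \<noteq> {0}" using J unfolding nz_fg_ideal_def by blast
  have nzJ: "nz_frac_ideal D J" using nz_fg_imp_nz_frac[OF J] .
  define C where "C = ideal_mult D (st J) (finv D (st J))"
  have CD: "C \<subseteq> D" unfolding C_def by (rule ideal_mult_finv_subset_D)
  obtain d where d: "d \<in> D" "d \<noteq> 0" "\<forall>y\<in>st J. d * y \<in> D"
    using star_nz[OF nzJ] by (auto simp: nz_frac_ideal_def frac_ideal_def)
  obtain s0 where s0: "s0 \<in> S" "s0 \<noteq> 0" using S gen_zeros by blast
  have "s0 \<in> st J" using s0 S gen_superset star_extensive[OF nzJ] by blast
  moreover have "d \<in> finv D (st J)" using d(3) by (simp add: finv_def)
  ultimately have "s0 * d \<in> C" unfolding C_def by (rule mem_ideal_mult)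
  moreover have "dsubmodule D C" unfolding C_def ideal_mult_def by (rule dsubmodule_gen)
  ultimately have nzC: "nz_frac_ideal D C" using nz_frac_ideal_integral[OF _ CD] s0 d by simp
  have "\<not> C \<subseteq> P" if P: "max_star P" for P
  proof -
    obtain g where g: "g \<in> S" "g \<noteq> 0" "\<forall>s\<in>S. s / g \<in> V P"
      using exists_local_min[OF P S(1)] s0 by blast
    obtain u where u: "u \<in> D - P" "\<forall>y\<in>st J. u * y / g \<in> D"
      using star_gen_local_bound[OF P S(1) _ g(2,3)] S by auto
    have "g \<in> st J" using g S gen_superset star_extensive[OF nzJ] by blast
    moreover have "u / g \<in> finv D (st J)" using u(2) by (simp add: finv_def)
    ultimately have "g * (u / g) \<in> C" unfolding C_def by (rule mem_ideal_mult)
    then show ?thesis using g u by auto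
  qed
  then show ?thesis
    unfolding star_invertible_def C_def[symmetric] using star_eq_D_if_not_in_max[OF nzC CD] by blast
qed

text \<open>Because \<open>x / 0 = 0\<close>, this only carries information for nonzero \<open>x, y\<close>.\<close>

definition loc_assoc :: "'a set \<Rightarrow> 'a \<Rightarrow> 'a \<Rightarrow> bool" where
  "loc_assoc P x y \<longleftrightarrow> x / y \<in> V P \<and> y / x \<in> V P"

lemma loc_assoc_refl: "max_star P \<Longrightarrow> x \<noteq> 0 \<Longrightarrow> loc_assoc P x x"
  unfolding loc_assoc_def using D_subset_V one_in_D by simp

lemma loc_assoc_sym: "loc_assoc P x y \<Longrightarrow> loc_assoc P y x"
  unfolding loc_assoc_def by blast

lemma loc_assoc_trans: "max_star P \<Longrightarrow> loc_assoc P x y \<Longrightarrow> loc_assoc P y z \<Longrightarrow> y \<noteq> 0 \<Longrightarrow> loc_assoc P x z"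
  unfolding loc_assoc_def using V_div_trans by blast

lemma loc_assoc_power: "max_star P \<Longrightarrow> loc_assoc P x y \<Longrightarrow> loc_assoc P (x ^ n) (y ^ n)"
  unfolding loc_assoc_def using power_in_V by (metis power_divide)

lemma loc_assoc_mult:
  "max_star P \<Longrightarrow> loc_assoc P x y \<Longrightarrow> loc_assoc P x' y' \<Longrightarrow> loc_assoc P (x * x') (y * y')"
  unfolding loc_assoc_def using mult_in_V by (metis times_divide_times_eq)

lemma loc_assoc_one_iff: "max_star P \<Longrightarrow> e \<in> D \<Longrightarrow> loc_assoc P e 1 \<longleftrightarrow> 1 / e \<in> V P"
  unfolding loc_assoc_def using D_subset_V by simp

lemma loc_assoc_one_if_divides_unit:
  assumes P: "max_star P" and z: "z \<in> D" "z \<notin> P" "z / m \<in> V P" and m: "m \<in> D"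
  shows "loc_assoc P m 1"
proof -
  have "z \<noteq> 0" using z max_star_zero[OF P] by auto
  then have "1 / m = (z / m) * (1 / z)" by simp
  then have "1 / m \<in> V P" using mult_in_V[OF P z(3) inverse_in_V[OF P z(1,2)]] by simp
  then show ?thesis using loc_assoc_one_iff[OF P m] by simp
qed

lemma ipow_local_bound:
  assumes P: "max_star P" and g: "g \<noteq> 0" and Ag: "\<forall>y\<in>A. y / g \<in> V P"
  shows "\<forall>y\<in>ipow D A n. y / g ^ n \<in> V P"
proof (induct n)
  case 0 then show ?case using D_subset_V[OF P] by simp
next
  case (Suc n)
  have "a * b / g ^ Suc n \<in> V P" if "a \<in> A" "b \<in> ipow D A n" for a b
  proof -
    have "(a / g) * (b / g ^ n) \<in> V P" using mult_in_V[OF P] Ag Suc that by blast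
    moreover have "a * b / g ^ Suc n = (a / g) * (b / g ^ n)" by simp
    ultimately show ?thesis by simp
  qed
  then have "ipow D A (Suc n) \<subseteq> {y. y / g ^ Suc n \<in> V P}"
    unfolding ipow.simps ideal_mult_def by (intro gen_least[OF dsubmodule_local_multiples[OF P]]) blast
  then show ?case by blast
qed

lemma star_gen_between:
  assumes P: "max_star P" and T: "finite T" "S \<subseteq> T" "T \<subseteq> P" and S: "gen D S \<noteq> {0}"
  shows "finite_type D st (st (gen D T))" "st (gen D S) \<subseteq> st (gen D T)"
    "T \<subseteq> st (gen D T)" "st (gen D T) \<subseteq> P"
proof -
  have nz: "gen D T \<noteq> {0}" using gen_mono[OF T(2)] S dsubmodule_gen dsubmodule_zero by blast
  show "finite_type D st (st (gen D T))" using finite_type_star_gen[OF T(1) nz] .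
  show "st (gen D S) \<subseteq> st (gen D T)" using star_gen_mono[OF T(1,2) S] .
  show "T \<subseteq> st (gen D T)" using gen_subset_star_gen[OF T(1) nz] .
  show "st (gen D T) \<subseteq> P"
    using star_subset_star_ideal[OF max_star_star_ideal[OF P] nz_frac_ideal_gen[OF T(1) nz]]
      gen_least[OF max_star_dsubmodule[OF P] T(3)] by blast
qed

text \<open>If \<open>A\<close> lay in distinct \<open>P, Q\<close>, enlarge it to \<open>B\<^sub>1 \<subseteq> Q\<close> containing some \<open>x \<notin> P\<close> and
  to \<open>B\<^sub>2 \<subseteq> P\<close> avoiding every other maximal \<open>\<star>\<close>-ideal through a fixed \<open>a\<^sub>0 \<in> A\<close>; then no
  maximal \<open>\<star>\<close>-ideal contains \<open>B\<^sub>1 + B\<^sub>2\<close>.\<close>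

lemma super_homog_max_star_unique:
  assumes sh: "super_homog D st A" and P: "max_star P" "A \<subseteq> P" and Q: "max_star Q" "A \<subseteq> Q"
  shows "Q = P"
proof (rule ccontr)
  assume "Q \<noteq> P"
  have AD: "A \<subseteq> D" and ft: "finite_type D st A" using sh by (auto simp: super_homog_def)
  have sums: "\<forall>B1 B2. finite_type D st B1 \<and> B1 \<subseteq> D \<and> B1 \<noteq> D \<and> A \<subseteq> B1 \<and>
      finite_type D st B2 \<and> B2 \<subseteq> D \<and> B2 \<noteq> D \<and> A \<subseteq> B2 \<longrightarrow> st (ideal_sum D B1 B2) \<noteq> D"
    using sh unfolding super_homog_def by blast
  obtain S where S: "finite S" "gen D S \<noteq> {0}" "A = st (gen D S)" using finite_typeE[OF ft] .
  have SA: "S \<subseteq> A" using gen_subset_star_gen[OF S(1,2)] S(3) by simp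
  obtain a0 where a0: "a0 \<in> S" "a0 \<noteq> 0" using S(2) gen_zeros by blast
  define F where "F = {R. max_star R \<and> a0 \<in> R}"
  have "a0 \<in> D" using a0 SA AD by blast
  then have "finite F" using finite_max_star_containing a0(2) unfolding F_def by blast
  obtain x where x: "x \<in> Q" "x \<notin> P" using max_star_maximal[OF Q(1) P(1)] \<open>Q \<noteq> P\<close> by blast
  have "\<forall>R\<in>F - {P}. \<exists>y. y \<in> P \<and> y \<notin> R"
    using max_star_maximal[OF P(1)] unfolding F_def by blast
  then obtain z where z: "\<forall>R\<in>F - {P}. z R \<in> P \<and> z R \<notin> R" by metis
  let ?T1 = "insert x S" and ?T2 = "S \<union> z ` (F - {P})"
  have T1: "finite ?T1" "S \<subseteq> ?T1" "?T1 \<subseteq> Q" using S(1) x SA Q(2) by auto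
  have T2: "finite ?T2" "S \<subseteq> ?T2" "?T2 \<subseteq> P" using S(1) \<open>finite F\<close> z SA P(2) by auto
  note B1 = star_gen_between[OF Q(1) T1 S(2), folded S(3)]
  note B2 = star_gen_between[OF P(1) T2 S(2), folded S(3)]
  have P1: "st (gen D ?T1) \<subseteq> D" "st (gen D ?T1) \<noteq> D"
    using subset_max_star_proper[OF Q(1) B1(4)] by auto
  have P2: "st (gen D ?T2) \<subseteq> D" "st (gen D ?T2) \<noteq> D"
    using subset_max_star_proper[OF P(1) B2(4)] by auto
  have "st (ideal_sum D (st (gen D ?T1)) (st (gen D ?T2))) \<noteq> D"
    using sums B1(1,2) B2(1,2) P1 P2 by blast
  moreover have "a0 \<in> st (gen D ?T1)" using a0(1) T1(2) B1(3) by blast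
  ultimately obtain R where R: "max_star R" "st (gen D ?T1) \<subseteq> R" "st (gen D ?T2) \<subseteq> R"
    using max_star_above_sum[OF P1(1) P2(1) _ a0(2)] by blast
  then have "R \<in> F" using \<open>a0 \<in> st (gen D ?T1)\<close> unfolding F_def by blast
  show False
  proof (cases "R = P")
    case True then show False using R(2) B1(3) x(2) by blast
  next
    case False then show False using R(3) B2(3) z \<open>R \<in> F\<close> by blast
  qed
qed

lemma super_homog_unique_max:
  assumes sh: "super_homog D st A"
  obtains P where "max_star P" "A \<subseteq> P" "\<And>Q. max_star Q \<Longrightarrow> A \<subseteq> Q \<Longrightarrow> Q = P"
proof -
  have AD: "A \<subseteq> D" "A \<noteq> D" and ft: "finite_type D st A" using sh by (auto simp: super_homog_def)
  have nzA: "nz_frac_ideal D A" and stA: "st A = A" using ft by (auto simp: finite_type_def star_ideal_def)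
  obtain P where P: "max_star P" "A \<subseteq> P" using max_star_ideal_above[OF nzA AD(1)] stA AD(2) by auto
  then show ?thesis using that super_homog_max_star_unique[OF sh P] by blast
qed

definition concentrated_at :: "'a set \<Rightarrow> 'a \<Rightarrow> 'a set \<Rightarrow> bool" where
  "concentrated_at P g A \<longleftrightarrow> A \<subseteq> D \<and> g \<in> A \<and> g \<noteq> 0 \<and> (\<forall>t\<in>A. t / g \<in> V P) \<and>
     (\<forall>Q. max_star Q \<and> Q \<noteq> P \<longrightarrow> \<not> A \<subseteq> Q)"

lemma super_homog_concentrated:
  assumes sh: "super_homog D st A"
  obtains P g where "max_star P" "concentrated_at P g A"
proof -
  obtain P where P: "max_star P" "A \<subseteq> P" and uniq: "\<And>Q. max_star Q \<Longrightarrow> A \<subseteq> Q \<Longrightarrow> Q = P"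
    using super_homog_unique_max[OF sh] by blast
  have AD: "A \<subseteq> D" and ft: "finite_type D st A" using sh by (auto simp: super_homog_def)
  obtain S where S: "finite S" "gen D S \<noteq> {0}" "A = st (gen D S)" using finite_typeE[OF ft] .
  obtain g where g: "g \<in> S" "g \<noteq> 0" "\<forall>s\<in>S. s / g \<in> V P"
    using exists_local_min[OF P(1) S(1)] S(2) gen_zeros by blast
  have "gen D S \<subseteq> {y. y / g \<in> V P}" using g by (intro gen_least[OF dsubmodule_local_multiples[OF P(1)]]) auto
  then have "\<forall>t\<in>A. t / g \<in> V P" using star_local_bound[OF P(1) nz_frac_ideal_gen[OF S(1,2)] g(2)] S(3) by blast
  moreover have "g \<in> A" using g gen_subset_star_gen[OF S(1,2)] S(3) by blast
  ultimately have "concentrated_at P g A" using AD g uniq unfolding concentrated_at_def by blast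
  then show ?thesis using that P(1) by blast
qed

lemma mem_star_ipow:
  assumes P: "max_star P" and conc: "concentrated_at P g A" and x: "x \<in> D" "x / g ^ n \<in> V P"
  shows "x \<in> st (ipow D A n)"
proof -
  have A: "A \<subseteq> D" "g \<in> A" "g \<noteq> 0" "\<And>Q. max_star Q \<Longrightarrow> Q \<noteq> P \<Longrightarrow> \<not> A \<subseteq> Q"
    using conc by (auto simp: concentrated_at_def)
  show ?thesis
  proof (rule mem_star_if_locally[OF nz_frac_ideal_ipow[OF A(1-3)]])
    fix Q assume Q: "max_star Q"
    show "\<exists>s\<in>D - Q. s * x \<in> ipow D A n"
    proof (cases "Q = P")
      case True
      obtain s where s: "s \<in> D" "s \<notin> P" "s * (x / g ^ n) \<in> D" using x(2) unfolding mem_V by blast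
      have "s * x = (s * (x / g ^ n)) * g ^ n" using A(3) by simp
      also have "\<dots> \<in> ipow D A n" using dsubmodule_mult[OF dsubmodule_ipow s(3) power_in_ipow[OF A(2)]] .
      finally show ?thesis using s True by blast
    next
      case False
      then obtain u where u: "u \<in> A" "u \<notin> Q" using A(4)[OF Q] by blast
      then have "u ^ n \<in> D - Q" using power_notin_max_star[OF Q] power_in_D A(1) by blast
      moreover have "u ^ n * x \<in> ipow D A n"
        using dsubmodule_mult[OF dsubmodule_ipow x(1) power_in_ipow[OF u(1)]] by (simp add: mult.commute)
      ultimately show ?thesis by blast
    qed
  qed
qed

lemma star_ipow_eq_smulI:
  assumes P: "max_star P" and conc: "concentrated_at P g A"
    and x: "x \<in> D" "x \<noteq> 0" "loc_assoc P x (g ^ n)" "\<And>Q. max_star Q \<Longrightarrow> Q \<noteq> P \<Longrightarrow> loc_assoc Q x 1"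
  shows "st (ipow D A n) = smul x D"
proof
  have A: "A \<subseteq> D" "g \<in> A" "g \<noteq> 0" "\<forall>t\<in>A. t / g \<in> V P"
    using conc by (auto simp: concentrated_at_def)
  have nzAn: "nz_frac_ideal D (ipow D A n)" using nz_frac_ideal_ipow[OF A(1-3)] .
  show "st (ipow D A n) \<subseteq> smul x D"
  proof
    fix y assume y: "y \<in> st (ipow D A n)"
    have "y / x \<in> V Q" if Q: "max_star Q" for Q
    proof (cases "Q = P")
      case True
      have "y / g ^ n \<in> V P"
        using star_local_bound[OF P nzAn _ ipow_local_bound[OF P A(3,4)]] A(3) y by simp
      then show ?thesis using V_div_trans[OF P _ _] x(3) A(3) True by (simp add: loc_assoc_def)
    next
      case False
      have "y \<in> V Q" using D_subset_V[OF Q] y star_subset_D[OF nzAn ipow_subset_D[OF A(1)]] by blast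
      moreover have "1 / x \<in> V Q" using x(4)[OF Q False] loc_assoc_one_iff[OF Q x(1)] by simp
      ultimately show ?thesis using mult_in_V[OF Q] by fastforce
    qed
    then have "y / x \<in> D" using mem_D_iff_local by blast
    then show "y \<in> smul x D" using x(2) mem_smul by (metis nonzero_mult_div_cancel_left times_divide_eq_right)
  qed
  have "x \<in> st (ipow D A n)" using mem_star_ipow[OF P conc x(1)] x(3) by (simp add: loc_assoc_def)
  then show "smul x D \<subseteq> st (ipow D A n)"
    using dsubmodule_mult[OF star_dsubmodule[OF nzAn]] by (auto simp: mem_smul mult.commute)
qed

lemma star_ipow_eq_smulD:
  assumes P: "max_star P" and conc: "concentrated_at P g A" and eq: "st (ipow D A n) = smul x D"
  shows "x \<in> D \<and> x \<noteq> 0 \<and> loc_assoc P x (g ^ n) \<and> (\<forall>Q. max_star Q \<and> Q \<noteq> P \<longrightarrow> loc_assoc Q x 1)"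
proof -
  have A: "A \<subseteq> D" "g \<in> A" "g \<noteq> 0" "\<forall>t\<in>A. t / g \<in> V P" "\<And>Q. max_star Q \<Longrightarrow> Q \<noteq> P \<Longrightarrow> \<not> A \<subseteq> Q"
    using conc by (auto simp: concentrated_at_def)
  have nzAn: "nz_frac_ideal D (ipow D A n)" using nz_frac_ideal_ipow[OF A(1-3)] .
  have sub: "ipow D A n \<subseteq> smul x D" using star_extensive[OF nzAn] eq by simp
  have "g ^ n \<in> smul x D" using sub power_in_ipow[OF A(2)] by blast
  then obtain d where d: "d \<in> D" "g ^ n = x * d" unfolding mem_smul by blast
  have x0: "x \<noteq> 0" using d A(3) by auto
  have xst: "x \<in> st (ipow D A n)" using eq mem_smul_self by simp
  have xD: "x \<in> D" using xst star_subset_D[OF nzAn ipow_subset_D[OF A(1)]] by blast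
  have "x / g ^ n \<in> V P" using star_local_bound[OF P nzAn _ ipow_local_bound[OF P A(3,4)]] A(3) xst by simp
  moreover have "g ^ n / x = d" using d x0 by simp
  ultimately have "loc_assoc P x (g ^ n)" unfolding loc_assoc_def using D_subset_V[OF P d(1)] by simp
  moreover have "loc_assoc Q x 1" if Q: "max_star Q" "Q \<noteq> P" for Q
  proof -
    obtain w where w: "w \<in> A" "w \<notin> Q" using A(5)[OF Q] by blast
    have "w ^ n \<in> smul x D" using sub power_in_ipow[OF w(1)] by blast
    then obtain d' where d': "d' \<in> D" "w ^ n = x * d'" unfolding mem_smul by blast
    have w0: "w \<noteq> 0" using w max_star_zero[OF Q(1)] by auto
    have "d' \<noteq> 0" using d'(2) w0 by auto
    then have "1 / x = d' * (1 / w) ^ n" using d' w0 x0 by (simp add: power_one_over field_simps)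
    then have "1 / x \<in> V Q"
      using mult_in_V[OF Q(1) D_subset_V[OF Q(1) d'(1)] power_in_V[OF Q(1) inverse_in_V[OF Q(1) _ w(2)]]] w A(1)
      by auto
    then show ?thesis using loc_assoc_one_iff[OF Q(1) xD] by simp
  qed
  ultimately show ?thesis using xD x0 by blast
qed

lemma loc_assoc_lcm:
  assumes Q: "max_star Q" and ab: "a \<in> D" "b \<in> D" "c \<noteq> 0"
    and lcm: "smul a D \<inter> smul b D = smul c D" and ba: "b / a \<in> V Q"
  shows "loc_assoc Q b c"
  unfolding loc_assoc_def
proof
  have "c \<in> smul b D" using lcm mem_smul_self by blast
  then obtain m where m: "m \<in> D" "c = b * m" by (auto simp: mem_smul)
  then have "b \<noteq> 0" using ab by auto
  then have "c / b = m" using m by simp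
  then show "c / b \<in> V Q" using D_subset_V[OF Q] m by simp
next
  obtain s where s: "s \<in> D" "s \<notin> Q" "s * (b / a) \<in> D" using ba unfolding mem_V by blast
  have "a \<noteq> 0"
  proof
    assume "a = 0"
    then have "smul a D = {0}" using zero_in_D by (auto simp: mem_smul)
    then show False using lcm mem_smul_self ab by blast
  qed
  then have "s * b = a * (s * (b / a))" by simp
  then have "s * b \<in> smul a D" using s(3) mem_smul by blast
  moreover have "s * b \<in> smul b D" using s(1) mem_smul by (metis mult.commute)
  ultimately have "s * b \<in> smul a D \<inter> smul b D" by blast
  then obtain t where t: "t \<in> D" "s * b = c * t" using lcm by (auto simp: mem_smul)
  then have "s * (b / c) = t" using ab by (simp add: field_simps)
  then show "b / c \<in> V Q" using s t unfolding mem_V by blast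
qed

text \<open>With \<open>c\<close> a generator of \<open>z\<^sup>n D \<inter> w\<^sup>n D\<close>, the element \<open>k = z\<^sup>n w\<^sup>n / c\<close> is a gcd
  of \<open>z\<^sup>n\<close> and \<open>w\<^sup>n\<close>, so locally it is associated to the one of smaller value.\<close>

lemma AGCD_local_gcd:
  assumes ag: "AGCD D" and z: "z \<in> D" "z \<noteq> 0" and w: "w \<in> D" "w \<noteq> 0"
  obtains n k where "n \<ge> 1" "k \<in> D" "k \<noteq> 0"
    "\<And>Q. max_star Q \<Longrightarrow> w / z \<in> V Q \<Longrightarrow> loc_assoc Q k (z ^ n)"
    "\<And>Q. max_star Q \<Longrightarrow> z / w \<in> V Q \<Longrightarrow> loc_assoc Q k (w ^ n)"
proof -
  obtain n c where n: "n \<ge> 1" "c \<in> D" and lcm: "smul (z ^ n) D \<inter> smul (w ^ n) D = smul c D"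
    using ag z w unfolding AGCD_def by blast
  have "z ^ n * w ^ n \<in> smul (z ^ n) D \<inter> smul (w ^ n) D"
    using power_in_D[OF w(1)] power_in_D[OF z(1)] by (auto simp: mem_smul mult.commute)
  then obtain k where k: "k \<in> D" "z ^ n * w ^ n = c * k" using lcm by (auto simp: mem_smul)
  have "z ^ n * w ^ n \<noteq> 0" using z w by simp
  then have c0: "c \<noteq> 0" and k0: "k \<noteq> 0" using k by auto
  have zw: "loc_assoc Q k (z ^ n)" if Q: "max_star Q" and wz: "w / z \<in> V Q" for Q
  proof -
    have "w ^ n / z ^ n \<in> V Q" using power_in_V[OF Q wz] by (simp add: power_divide)
    then have "loc_assoc Q (w ^ n) c"
      using loc_assoc_lcm[OF Q power_in_D[OF z(1)] power_in_D[OF w(1)] c0 lcm] by blast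
    moreover have "k / z ^ n = w ^ n / c" "z ^ n / k = c / w ^ n"
      using k(2) k0 z w c0 by (simp_all add: frac_eq_eq algebra_simps)
    ultimately show ?thesis unfolding loc_assoc_def by simp
  qed
  have wz: "loc_assoc Q k (w ^ n)" if Q: "max_star Q" and zw: "z / w \<in> V Q" for Q
  proof -
    have "z ^ n / w ^ n \<in> V Q" using power_in_V[OF Q zw] by (simp add: power_divide)
    then have "loc_assoc Q (z ^ n) c"
      using loc_assoc_lcm[OF Q power_in_D[OF w(1)] power_in_D[OF z(1)] c0] lcm by (simp add: Int_commute)
    moreover have "k / w ^ n = z ^ n / c" "w ^ n / k = c / z ^ n"
      using k(2) k0 z w c0 by (simp_all add: frac_eq_eq algebra_simps)
    ultimately show ?thesis unfolding loc_assoc_def by simp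
  qed
  show ?thesis using that n(1) k(1) k0 zw wz by blast
qed

text \<open>One gcd step: pass from \<open>e\<close> to a gcd of powers of \<open>e\<close> and \<open>u\<close>; this stays associated
  to a power of \<open>g\<close> at \<open>P\<close> (as \<open>u\<close> is a multiple of \<open>g\<close> there) and becomes a unit at \<open>Q\<^sub>1\<close>.\<close>

lemma AGCD_unit_at_one_more:
  assumes ag: "AGCD D" and P: "max_star P" and g: "g \<noteq> 0" and u: "u \<in> D" "u / g \<in> V P"
    and Q1: "max_star Q1" "u \<notin> Q1" and e: "e \<in> D" "e \<noteq> 0" "loc_assoc P e (g ^ N)"
  obtains m e' where "m \<ge> 1" "e' \<in> D" "e' \<noteq> 0" "loc_assoc P e' (g ^ (N * m))" "1 / e' \<in> V Q1"
    "\<And>Q. max_star Q \<Longrightarrow> 1 / e \<in> V Q \<Longrightarrow> 1 / e' \<in> V Q"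
proof -
  have u0: "u \<noteq> 0" using Q1 max_star_zero by auto
  have uN: "u ^ N \<in> D" "u ^ N \<noteq> 0" using u u0 power_in_D by auto
  obtain m e' where me: "m \<ge> 1" "e' \<in> D" "e' \<noteq> 0"
    and at_e: "\<And>Q. max_star Q \<Longrightarrow> u ^ N / e \<in> V Q \<Longrightarrow> loc_assoc Q e' (e ^ m)"
    and at_u: "\<And>Q. max_star Q \<Longrightarrow> e / u ^ N \<in> V Q \<Longrightarrow> loc_assoc Q e' ((u ^ N) ^ m)"
    using AGCD_local_gcd[OF ag e(1,2) uN] by blast
  have "u ^ N / g ^ N \<in> V P" using power_in_V[OF P u(2)] by (simp add: power_divide)
  then have "u ^ N / e \<in> V P" using V_div_trans[OF P _ _] e(3) g by (simp add: loc_assoc_def)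
  then have "loc_assoc P e' ((g ^ N) ^ m)"
    using loc_assoc_trans[OF P at_e[OF P] loc_assoc_power[OF P e(3)]] e(2) by simp
  then have at_P: "loc_assoc P e' (g ^ (N * m))" by (simp add: power_mult)
  have iu: "1 / u \<in> V Q1" using inverse_in_V[OF Q1(1) u(1) Q1(2)] .
  have "e / u ^ N = e * (1 / u) ^ N" by (simp add: power_one_over)
  then have "e / u ^ N \<in> V Q1" using mult_in_V[OF Q1(1) D_subset_V[OF Q1(1) e(1)] power_in_V[OF Q1(1) iu]] by simp
  then have uv: "(u ^ N) ^ m / e' \<in> V Q1" using at_u[OF Q1(1)] unfolding loc_assoc_def by blast
  have "1 / e' = ((u ^ N) ^ m / e') * ((1 / u) ^ N) ^ m"
    using u0 me(3) by (simp add: field_simps power_one_over)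
  then have at_Q1: "1 / e' \<in> V Q1"
    using mult_in_V[OF Q1(1) uv power_in_V[OF Q1(1) power_in_V[OF Q1(1) iu]]] by (simp only:)
  have "1 / e' \<in> V Q" if Q: "max_star Q" and ie: "1 / e \<in> V Q" for Q
  proof -
    have "u ^ N / e = u ^ N * (1 / e)" by simp
    then have "u ^ N / e \<in> V Q" using mult_in_V[OF Q D_subset_V[OF Q uN(1)] ie] by simp
    then have ev: "e ^ m / e' \<in> V Q" using at_e[OF Q] unfolding loc_assoc_def by blast
    have "1 / e' = (e ^ m / e') * (1 / e) ^ m" using e(2) me(3) by (simp add: field_simps)
    then show ?thesis using mult_in_V[OF Q ev power_in_V[OF Q ie]] by (simp only:)
  qed
  then show ?thesis using that me at_P at_Q1 by blast
qed

lemma AGCD_local_power_generator: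
  assumes ag: "AGCD D" and P: "max_star P" and g: "g \<in> D" "g \<noteq> 0"
    and A: "A \<subseteq> D" "\<forall>t\<in>A. t / g \<in> V P" and Qs: "finite Qs" "\<forall>Q\<in>Qs. max_star Q \<and> \<not> A \<subseteq> Q"
  shows "\<exists>N\<ge>1. \<exists>e\<in>D. e \<noteq> 0 \<and> loc_assoc P e (g ^ N) \<and>
    (\<forall>Q. max_star Q \<and> (g \<notin> Q \<or> Q \<in> Qs) \<longrightarrow> 1 / e \<in> V Q)"
  using Qs
proof (induct Qs)
  case empty
  have "loc_assoc P g (g ^ 1)" using loc_assoc_refl[OF P g(2)] by simp
  then show ?case using g inverse_in_V by (intro exI[of _ 1]) auto
next
  case (insert Q1 Qs)
  then obtain N e where Ne: "N \<ge> 1" "e \<in> D" "e \<noteq> 0" "loc_assoc P e (g ^ N)"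
    and unit: "\<forall>Q. max_star Q \<and> (g \<notin> Q \<or> Q \<in> Qs) \<longrightarrow> 1 / e \<in> V Q" by auto
  obtain u where u: "u \<in> A" "u \<notin> Q1" and Q1: "max_star Q1" using insert.prems by blast
  obtain m e' where "m \<ge> 1" "e' \<in> D" "e' \<noteq> 0" "loc_assoc P e' (g ^ (N * m))" "1 / e' \<in> V Q1"
    "\<And>Q. max_star Q \<Longrightarrow> 1 / e \<in> V Q \<Longrightarrow> 1 / e' \<in> V Q"
    using AGCD_unit_at_one_more[OF ag P g(2) _ _ Q1 u(2) Ne(2-4)] u(1) A by blast
  moreover have "N * m \<ge> 1" using Ne(1) \<open>m \<ge> 1\<close> by simp
  ultimately show ?case using unit by blast
qed

lemma AGCD_imp_star_power_principal:
  assumes ag: "AGCD D" and sh: "super_homog D st A"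
  shows "\<exists>n>0. \<exists>x. st (ipow D A n) = smul x D"
proof -
  obtain P g where P: "max_star P" and conc: "concentrated_at P g A"
    using super_homog_concentrated[OF sh] by blast
  then have A: "A \<subseteq> D" "g \<in> A" "g \<noteq> 0" "\<forall>t\<in>A. t / g \<in> V P"
    "\<And>Q. max_star Q \<Longrightarrow> Q \<noteq> P \<Longrightarrow> \<not> A \<subseteq> Q"
    by (auto simp: concentrated_at_def)
  have gD: "g \<in> D" using A by blast
  define Qs where "Qs = {Q. max_star Q \<and> g \<in> Q} - {P}"
  have "finite Qs" unfolding Qs_def using finite_max_star_containing[OF gD A(3)] by simp
  moreover have "\<forall>Q\<in>Qs. max_star Q \<and> \<not> A \<subseteq> Q" using A(5) unfolding Qs_def by blast
  ultimately obtain N e where Ne: "N \<ge> 1" "e \<in> D" "e \<noteq> 0" "loc_assoc P e (g ^ N)"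
    and unit: "\<forall>Q. max_star Q \<and> (g \<notin> Q \<or> Q \<in> Qs) \<longrightarrow> 1 / e \<in> V Q"
    using AGCD_local_power_generator[OF ag P gD A(3) A(1) A(4)] by blast
  have "loc_assoc Q e 1" if "max_star Q" "Q \<noteq> P" for Q
    using unit that loc_assoc_one_iff[OF that(1) Ne(2)] unfolding Qs_def by blast
  then have "st (ipow D A N) = smul e D" using star_ipow_eq_smulI[OF P conc Ne(2-4)] by blast
  then show ?thesis using Ne(1) by (intro exI[of _ N]) auto
qed

definition loc_radical :: "'a set \<Rightarrow> 'a \<Rightarrow> 'a set" where
  "loc_radical P g = {x \<in> D. \<exists>n\<ge>1. x ^ n / g \<in> V P}"

lemma power_add_local_bound:
  assumes P: "max_star P" and x: "x ^ n / g \<in> V P" "y / x \<in> V P" "x \<noteq> 0"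
  shows "(x + y) ^ n / g \<in> V P"
proof -
  have "x + y = x * (1 + y / x)" using x(3) by (simp add: field_simps)
  then have eq: "(x + y) ^ n / g = (x ^ n / g) * (1 + y / x) ^ n" by (simp add: power_mult_distrib)
  have "1 + y / x \<in> V P" using add_in_V[OF P D_subset_V[OF P one_in_D] x(2)] .
  then show ?thesis unfolding eq using mult_in_V[OF P x(1) power_in_V[OF P]] by blast
qed

lemma dsubmodule_loc_radical:
  assumes P: "max_star P" shows "dsubmodule D (loc_radical P g)"
  unfolding dsubmodule_def
proof (intro conjI ballI)
  show "0 \<in> loc_radical P g"
    unfolding loc_radical_def using zero_in_D D_subset_V[OF P zero_in_D] by (intro CollectI conjI exI[of _ 1]) auto
next
  fix x y assume xy: "x \<in> loc_radical P g" "y \<in> loc_radical P g"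
  obtain n where n: "x \<in> D" "n \<ge> 1" "x ^ n / g \<in> V P" using xy(1) unfolding loc_radical_def by blast
  obtain m where m: "y \<in> D" "m \<ge> 1" "y ^ m / g \<in> V P" using xy(2) unfolding loc_radical_def by blast
  have "(x + y) ^ n / g \<in> V P \<or> (x + y) ^ m / g \<in> V P"
  proof (cases "x = 0 \<or> y = 0")
    case True then show ?thesis using n m by auto
  next
    case nz: False
    show ?thesis
    proof (cases "y / x \<in> V P")
      case True then show ?thesis using power_add_local_bound[OF P n(3)] nz by blast
    next
      case False
      then have "x / y \<in> V P" using V_dichotomy[OF P] by blast
      then have "(y + x) ^ m / g \<in> V P" using power_add_local_bound[OF P m(3)] nz by blast
      then show ?thesis by (simp add: add.commute)
    qed
  qed
  then show "x + y \<in> loc_radical P g" unfolding loc_radical_def using add_in_D n m by blast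
next
  fix d x assume d: "d \<in> D" and "x \<in> loc_radical P g"
  then obtain n where n: "x \<in> D" "n \<ge> 1" "x ^ n / g \<in> V P" unfolding loc_radical_def by blast
  have eq: "(d * x) ^ n / g = d ^ n * (x ^ n / g)" by (simp add: power_mult_distrib)
  have "(d * x) ^ n / g \<in> V P" unfolding eq using mult_in_V[OF P D_subset_V[OF P power_in_D[OF d]] n(3)] .
  then show "d * x \<in> loc_radical P g" unfolding loc_radical_def using n mult_in_D d by blast
qed

lemma loc_radical_prime:
  assumes P: "max_star P" and xy: "x \<in> D" "y \<in> D" "x * y \<in> loc_radical P g"
  shows "x \<in> loc_radical P g \<or> y \<in> loc_radical P g"
proof -
  obtain n where n: "n \<ge> 1" "(x * y) ^ n / g \<in> V P" using xy(3) unfolding loc_radical_def by blast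
  have twice: "u ^ (2 * n) / g \<in> V P" if uv: "u ^ n / v ^ n \<in> V P" "u * v = x * y" "v \<noteq> 0" for u v
  proof -
    have "u ^ (2 * n) / g = ((x * y) ^ n / g) * (u ^ n / v ^ n)"
      using uv(3) by (simp flip: uv(2) add: power_mult_distrib mult_2 power_add)
    then show ?thesis using mult_in_V[OF P n(2) uv(1)] by simp
  qed
  show ?thesis
  proof (cases "x = 0 \<or> y = 0")
    case True then show ?thesis using dsubmodule_zero[OF dsubmodule_loc_radical[OF P]] by auto
  next
    case False
    then have "x ^ (2 * n) / g \<in> V P \<or> y ^ (2 * n) / g \<in> V P"
      using V_dichotomy[OF P, of "x ^ n" "y ^ n"] twice[of x y] twice[of y x] by (auto simp: mult.commute)
    moreover have "2 * n \<ge> 1" using n(1) by simp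
    ultimately show ?thesis unfolding loc_radical_def using xy(1,2) by blast
  qed
qed

lemma loc_radical_subset_max_star:
  assumes P: "max_star P" and g: "g \<in> P" "g \<noteq> 0" shows "loc_radical P g \<subseteq> P"
proof
  fix x assume "x \<in> loc_radical P g"
  then obtain n where n: "x \<in> D" "x ^ n / g \<in> V P" unfolding loc_radical_def by blast
  have "x ^ n \<in> P" using mem_max_star_if_div[OF P power_in_D[OF n(1)] n(2) g] .
  then show "x \<in> P" using power_notin_max_star[OF P n(1)] by blast
qed

lemma prime_ideal_loc_radical:
  assumes P: "max_star P" and g: "g \<in> P" "g \<noteq> 0" shows "prime_ideal D (loc_radical P g)"
  unfolding prime_ideal_def
proof (intro conjI ballI impI)
  show "loc_radical P g \<subseteq> D" unfolding loc_radical_def by blast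
  show "dsubmodule D (loc_radical P g)" using dsubmodule_loc_radical[OF P] .
  show "loc_radical P g \<noteq> D" using loc_radical_subset_max_star[OF P g] max_star_one[OF P] one_in_D by blast
qed (use loc_radical_prime[OF P] in blast)

text \<open>Here the independence of maximal \<open>\<star>\<close>-ideals enters: otherwise \<open>loc_radical P g\<close> would be
  a nonzero prime inside both \<open>P\<close> and \<open>P'\<close>.\<close>

lemma exists_local_multiple_notin:
  assumes P: "max_star P" and P': "max_star P'" "P \<noteq> P'" and g: "g \<in> P" "g \<noteq> 0"
  shows "\<exists>y\<in>D. y / g \<in> V P \<and> y \<notin> P'"
proof (rule ccontr)
  assume "\<not> ?thesis"
  then have "loc_radical P g \<subseteq> P'"
    using power_notin_max_star[OF P'(1)] power_in_D unfolding loc_radical_def by blast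
  moreover have "g \<in> loc_radical P g"
    unfolding loc_radical_def using g max_star_subset_D[OF P] D_subset_V[OF P one_in_D]
    by (intro CollectI conjI exI[of _ 1]) auto
  ultimately show False
    using no_common_prime[OF P P' prime_ideal_loc_radical[OF P g] _ loc_radical_subset_max_star[OF P g]] g(2)
    by blast
qed

lemma super_homog_if_unique_max:
  assumes P: "max_star P" and A: "finite_type D st A" "A \<subseteq> P"
    and uniq: "\<And>Q. max_star Q \<Longrightarrow> A \<subseteq> Q \<Longrightarrow> Q = P"
  shows "super_homog D st A"
proof -
  have nzA: "nz_frac_ideal D A" using A(1) by (simp add: finite_type_def star_ideal_def)
  then have "A \<noteq> {0}" "0 \<in> A" using dsubmodule_zero by (auto simp: nz_frac_ideal_def frac_ideal_def)
  then obtain a where a: "a \<in> A" "a \<noteq> 0" by blast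
  have inP: "X \<subseteq> P" if X: "finite_type D st X" "X \<subseteq> D" "X \<noteq> D" "A \<subseteq> X" for X
  proof -
    have nzX: "nz_frac_ideal D X" and stX: "st X = X" using X(1) by (auto simp: finite_type_def star_ideal_def)
    obtain R where "max_star R" "st X \<subseteq> R" using max_star_ideal_above[OF nzX X(2)] stX X(3) by auto
    then show ?thesis using uniq[of R] X(4) stX by simp
  qed
  have sum: "st (ideal_sum D X Y) \<noteq> D" if XY: "X \<subseteq> P" "Y \<subseteq> P" "A \<subseteq> X" for X Y
  proof -
    have sP: "ideal_sum D X Y \<subseteq> P"
      unfolding ideal_sum_def using XY by (intro gen_least[OF max_star_dsubmodule[OF P]]) blast
    have "a \<in> ideal_sum D X Y" using a XY gen_superset unfolding ideal_sum_def by blast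
    then have "nz_frac_ideal D (ideal_sum D X Y)"
      using nz_frac_ideal_integral[OF _ _ _ a(2)] dsubmodule_gen sP max_star_subset_D[OF P]
      unfolding ideal_sum_def by blast
    then have "st (ideal_sum D X Y) \<subseteq> P" using star_subset_star_ideal[OF max_star_star_ideal[OF P] _ sP] by blast
    then show ?thesis using subset_max_star_proper[OF P] by blast
  qed
  show ?thesis unfolding super_homog_def
  proof (intro conjI allI impI)
    show "A \<subseteq> D" "A \<noteq> D" using subset_max_star_proper[OF P A(2)] by auto
    show "finite_type D st A" using A(1) .
  next
    fix J assume "finite_type D st J \<and> A \<subseteq> J"
    then show "star_invertible D st J" using star_invertible_finite_type unfolding finite_type_def by blast
  next
    fix X Y assume "finite_type D st X \<and> X \<subseteq> D \<and> X \<noteq> D \<and> A \<subseteq> X \<and>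
      finite_type D st Y \<and> Y \<subseteq> D \<and> Y \<noteq> D \<and> A \<subseteq> Y"
    then show "st (ideal_sum D X Y) \<noteq> D" using sum inP by blast
  qed
qed

lemma exists_concentrated_super_homog:
  assumes a: "a \<in> D" "a \<noteq> 0" and b: "b \<in> D" "b \<noteq> 0" and P: "max_star P" "a \<in> P" "b \<in> P"
    and g: "g = a \<or> g = b" "a / g \<in> V P" "b / g \<in> V P"
  obtains A where "super_homog D st A" "concentrated_at P g A"
proof -
  have g0: "g \<noteq> 0" and gP: "g \<in> P" using g a b P by auto
  define F where "F = {Q. max_star Q \<and> a \<in> Q \<and> b \<in> Q}"
  have "finite F"
    using finite_max_star_containing[OF a] unfolding F_def by (rule finite_subset[rotated]) blast
  have "\<forall>Q\<in>F - {P}. \<exists>y. y \<in> D \<and> y / g \<in> V P \<and> y \<notin> Q"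
    using exists_local_multiple_notin[OF P(1) _ _ gP g0] unfolding F_def by blast
  then obtain y where y: "\<forall>Q\<in>F - {P}. y Q \<in> D \<and> y Q / g \<in> V P \<and> y Q \<notin> Q" by metis
  define T where "T = {a, b} \<union> y ` (F - {P})"
  have T: "finite T" "T \<subseteq> D" "\<forall>t\<in>T. t / g \<in> V P" "a \<in> T" "b \<in> T" "g \<in> T"
    unfolding T_def using \<open>finite F\<close> a b y g by auto
  then have TP: "T \<subseteq> P" using mem_max_star_if_div[OF P(1) _ _ gP g0] by blast
  have nz: "gen D T \<noteq> {0}" using T(4) gen_superset a(2) by blast
  define A where "A = st (gen D T)"
  note between = star_gen_between[OF P(1) T(1) order_refl TP nz, folded A_def]
  have ft: "finite_type D st A" and TA: "T \<subseteq> A" and AP: "A \<subseteq> P"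
    using between(1,3,4) .
  have uniq: "Q = P" if Q: "max_star Q" "A \<subseteq> Q" for Q
  proof (rule ccontr)
    assume "Q \<noteq> P"
    then have "Q \<in> F - {P}" unfolding F_def using Q TA T(4,5) by blast
    then have "y Q \<in> T" "y Q \<notin> Q" using y unfolding T_def by auto
    then show False using Q(2) TA by blast
  qed
  have "gen D T \<subseteq> {t. t / g \<in> V P}" using T(3) by (intro gen_least[OF dsubmodule_local_multiples[OF P(1)]]) auto
  then have "\<forall>t\<in>A. t / g \<in> V P"
    unfolding A_def using star_local_bound[OF P(1) nz_frac_ideal_gen[OF T(1) nz] g0] by blast
  moreover have "A \<subseteq> D" "g \<in> A" using AP max_star_subset_D[OF P(1)] TA T(6) by blast+
  moreover have "\<not> A \<subseteq> Q" if "max_star Q" "Q \<noteq> P" for Q using uniq that by blast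
  ultimately have "concentrated_at P g A" unfolding concentrated_at_def using g0 by blast
  then show ?thesis using that super_homog_if_unique_max[OF P(1) ft AP uniq] by blast
qed

lemma combine_local_generators:
  assumes "finite F"
    and "\<forall>P\<in>F. \<exists>n>0. \<exists>x. x \<noteq> 0 \<and> loc_assoc P x (h P ^ n) \<and> (\<forall>Q. max_star Q \<and> Q \<noteq> P \<longrightarrow> loc_assoc Q x 1)"
  shows "\<exists>N\<ge>1. \<exists>X. X \<noteq> 0 \<and> (\<forall>Q. max_star Q \<longrightarrow> loc_assoc Q X (if Q \<in> F then h Q ^ N else 1))"
  using assms
proof (induct F)
  case empty
  have "(1::nat) \<ge> 1 \<and> (1::'a) \<noteq> 0 \<and> (\<forall>Q. max_star Q \<longrightarrow> loc_assoc Q 1 (if Q \<in> {} then h Q ^ 1 else 1))"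
    using loc_assoc_refl by simp
  then show ?case by blast
next
  case (insert P F)
  then obtain N X where N: "N \<ge> 1" "X \<noteq> 0"
    and X: "\<forall>Q. max_star Q \<longrightarrow> loc_assoc Q X (if Q \<in> F then h Q ^ N else 1)" by auto
  obtain n x where n: "n > 0" "x \<noteq> 0" "loc_assoc P x (h P ^ n)"
    and x: "\<forall>Q. max_star Q \<and> Q \<noteq> P \<longrightarrow> loc_assoc Q x 1" using insert.prems by blast
  have "loc_assoc Q (X ^ n * x ^ N) (if Q \<in> insert P F then h Q ^ (N * n) else 1)" if Q: "max_star Q" for Q
  proof -
    have xQ: "loc_assoc Q x (if Q = P then h P ^ n else 1)" using n x Q by auto
    have XQ: "loc_assoc Q X (if Q \<in> F then h Q ^ N else 1)" using X Q by blast
    have "loc_assoc Q (X ^ n * x ^ N)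
        ((if Q \<in> F then h Q ^ N else 1) ^ n * (if Q = P then h P ^ n else 1) ^ N)"
      using loc_assoc_mult[OF Q loc_assoc_power[OF Q XQ] loc_assoc_power[OF Q xQ]] .
    moreover have "(if Q \<in> F then h Q ^ N else 1) ^ n * (if Q = P then h P ^ n else 1) ^ N =
        (if Q \<in> insert P F then h Q ^ (N * n) else 1)"
      using insert.hyps(2) by (auto simp: power_mult[symmetric] mult.commute[of N n])
    ultimately show ?thesis by simp
  qed
  moreover have "N * n \<ge> 1" "X ^ n * x ^ N \<noteq> 0" using N n by auto
  ultimately show ?case by blast
qed

lemma div_in_D_if_local:
  assumes "\<And>Q. max_star Q \<Longrightarrow> z / m Q \<in> V Q \<and> m Q / X \<in> V Q \<and> m Q \<noteq> 0"
  shows "z / X \<in> D"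
  unfolding mem_D_iff_local using assms V_div_trans by blast

text \<open>If \<open>X\<close> is locally associated to whichever of \<open>a, b\<close> has the smaller value, then \<open>ab / X\<close>
  is locally associated to the larger one, hence generates \<open>aD \<inter> bD\<close>.\<close>

lemma smul_inter_eq_local_lcm:
  assumes a: "a \<in> D" "a \<noteq> 0" and b: "b \<in> D" "b \<noteq> 0" and X: "X \<noteq> 0"
    and m: "\<And>Q. max_star Q \<Longrightarrow> (m Q = a \<or> m Q = b) \<and> a / m Q \<in> V Q \<and> b / m Q \<in> V Q \<and> loc_assoc Q X (m Q)"
  shows "smul a D \<inter> smul b D = smul (a * b / X) D"
proof
  have "m Q \<noteq> 0" if "max_star Q" for Q using m[OF that] a b by auto
  then have aX: "a / X \<in> D" and bX: "b / X \<in> D"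
    using div_in_D_if_local[of a m X] div_in_D_if_local[of b m X] m unfolding loc_assoc_def by blast+
  show "smul (a * b / X) D \<subseteq> smul a D \<inter> smul b D"
  proof
    fix y assume "y \<in> smul (a * b / X) D"
    then obtain d where d: "d \<in> D" "y = a * b / X * d" by (auto simp: mem_smul)
    then have "y = a * (b / X * d)" "y = b * (a / X * d)" by simp_all
    then show "y \<in> smul a D \<inter> smul b D" using mult_in_D[OF aX d(1)] mult_in_D[OF bX d(1)] mem_smul by blast
  qed
  show "smul a D \<inter> smul b D \<subseteq> smul (a * b / X) D"
  proof
    fix y assume "y \<in> smul a D \<inter> smul b D"
    then have "y \<in> smul a D" "y \<in> smul b D" by auto
    then obtain p q where pq: "p \<in> D" "y = a * p" "q \<in> D" "y = b * q" unfolding mem_smul by blast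
    have "y / (a * b / X) \<in> V Q" if Q: "max_star Q" for Q
    proof -
      have Xm: "X / m Q \<in> V Q" using m[OF Q] unfolding loc_assoc_def by blast
      show ?thesis
      proof (cases "m Q = a")
        case True
        have "y / (a * b / X) = q * (X / a)" unfolding pq(4) using a(2) b(2) X by (simp add: field_simps)
        then show ?thesis using mult_in_V[OF Q D_subset_V[OF Q pq(3)] Xm[unfolded True]] by (simp only:)
      next
        case False
        then have "m Q = b" using m[OF Q] by blast
        have "y / (a * b / X) = p * (X / b)" unfolding pq(2) using a(2) b(2) X by (simp add: field_simps)
        then show ?thesis using mult_in_V[OF Q D_subset_V[OF Q pq(1)] Xm[unfolded \<open>m Q = b\<close>]] by (simp only:)
      qed
    qed
    then have "y / (a * b / X) \<in> D" using mem_D_iff_local by blast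
    moreover have "y = (a * b / X) * (y / (a * b / X))" using a b X by simp
    ultimately show "y \<in> smul (a * b / X) D" using mem_smul by blast
  qed
qed

lemma local_power_generator:
  assumes H: "\<forall>A. super_homog D st A \<longrightarrow> (\<exists>n>0. \<exists>x. st (ipow D A n) = smul x D)"
    and a: "a \<in> D" "a \<noteq> 0" and b: "b \<in> D" "b \<noteq> 0" and P: "max_star P" "a \<in> P" "b \<in> P"
    and g: "g = a \<or> g = b" "a / g \<in> V P" "b / g \<in> V P"
  shows "\<exists>n>0. \<exists>x. x \<noteq> 0 \<and> loc_assoc P x (g ^ n) \<and> (\<forall>Q. max_star Q \<and> Q \<noteq> P \<longrightarrow> loc_assoc Q x 1)"
proof -
  obtain A where A: "super_homog D st A" "concentrated_at P g A"
    using exists_concentrated_super_homog[OF a b P g] by blast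
  then obtain n x where "n > 0" "st (ipow D A n) = smul x D" using H by blast
  then show ?thesis using star_ipow_eq_smulD[OF P(1) A(2)] by blast
qed

lemma star_power_principal_imp_AGCD:
  assumes H: "\<forall>A. super_homog D st A \<longrightarrow> (\<exists>n>0. \<exists>x. st (ipow D A n) = smul x D)"
  shows "AGCD D"
  unfolding AGCD_def
proof (intro ballI impI)
  fix a b assume "a \<in> D" "b \<in> D" "a \<noteq> 0 \<and> b \<noteq> 0"
  then have a: "a \<in> D" "a \<noteq> 0" and b: "b \<in> D" "b \<noteq> 0" by auto
  define m where "m Q = (if a / b \<in> V Q then b else a)" for Q
  have m: "(m Q = a \<or> m Q = b) \<and> a / m Q \<in> V Q \<and> b / m Q \<in> V Q" if Q: "max_star Q" for Q
    using V_dichotomy[OF Q, of a b] D_subset_V[OF Q one_in_D] a b unfolding m_def by auto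
  define F where "F = {Q. max_star Q \<and> a \<in> Q \<and> b \<in> Q}"
  have "finite F"
    using finite_max_star_containing[OF a] unfolding F_def by (rule finite_subset[rotated]) blast
  have "\<forall>P\<in>F. \<exists>n>0. \<exists>x. x \<noteq> 0 \<and> loc_assoc P x (m P ^ n) \<and> (\<forall>Q. max_star Q \<and> Q \<noteq> P \<longrightarrow> loc_assoc Q x 1)"
  proof
    fix P assume "P \<in> F"
    then have P: "max_star P" "a \<in> P" "b \<in> P" unfolding F_def by auto
    then show "\<exists>n>0. \<exists>x. x \<noteq> 0 \<and> loc_assoc P x (m P ^ n) \<and> (\<forall>Q. max_star Q \<and> Q \<noteq> P \<longrightarrow> loc_assoc Q x 1)"
      using local_power_generator[OF H a b P] m[OF P(1)] by blast
  qed
  then obtain N X where N: "N \<ge> 1" "X \<noteq> 0"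
    and X: "\<forall>Q. max_star Q \<longrightarrow> loc_assoc Q X (if Q \<in> F then m Q ^ N else 1)"
    using combine_local_generators[OF \<open>finite F\<close>] by blast
  have mN: "(m Q ^ N = a ^ N \<or> m Q ^ N = b ^ N) \<and> a ^ N / m Q ^ N \<in> V Q \<and> b ^ N / m Q ^ N \<in> V Q \<and>
      loc_assoc Q X (m Q ^ N)" if Q: "max_star Q" for Q
  proof (cases "Q \<in> F")
    case True then show ?thesis using X Q m[OF Q] power_in_V[OF Q] by (auto simp flip: power_divide)
  next
    case False
    then obtain z where "z \<in> {a, b}" "z \<notin> Q" using Q unfolding F_def by blast
    then have "loc_assoc Q (m Q) 1" using loc_assoc_one_if_divides_unit[OF Q] m[OF Q] a b by auto
    then have "loc_assoc Q 1 (m Q ^ N)" using loc_assoc_sym loc_assoc_power[OF Q] by fastforce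
    then have "loc_assoc Q X (m Q ^ N)" using loc_assoc_trans[OF Q] X Q False by fastforce
    then show ?thesis using m[OF Q] power_in_V[OF Q] by (auto simp flip: power_divide)
  qed
  have lcm: "smul (a ^ N) D \<inter> smul (b ^ N) D = smul (a ^ N * b ^ N / X) D"
    using smul_inter_eq_local_lcm[of "a ^ N" "b ^ N" X "\<lambda>Q. m Q ^ N"] mN power_in_D a b N(2) by simp
  have "a ^ N * b ^ N / X \<in> smul (a ^ N) D" using lcm mem_smul_self by blast
  then have "a ^ N * b ^ N / X \<in> D" using mult_in_D[OF power_in_D[OF a(1)]] by (auto simp: mem_smul)
  then show "\<exists>n\<ge>1. \<exists>c\<in>D. smul (a ^ n) D \<inter> smul (b ^ n) D = smul c D" using N(1) lcm by blast
qed

end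

theorem propositionQ8:
  fixes D :: "'a::field set" and st :: "'a set \<Rightarrow> 'a set"
  assumes "is_quotient_field_of D"
    and "star_operation D st"
    and "finite_character D st"
    and "star_IRKT D st"
  shows "AGCD D \<longleftrightarrow>
    (\<forall>A. super_homog D st A \<longrightarrow> (\<exists>n>0. \<exists>x. st (ipow D A n) = smul x D))"
proof -
  interpret star_irkt D st
    using assms by unfold_locales
  show ?thesis
    using AGCD_imp_star_power_principal star_power_principal_imp_AGCD by blast
qed

end
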